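(* Let $p$ be a prime, $q=p^n$, $d$ a natural number with $(d,p)=1$, and fix a nontrivial additive character $\psi$ of $\mathbb{F}_p$. For every $f\in\mathcal{F}_d$ the character $\chi_f$ is a primitive Dirichlet character modulo $x^{d+1}$; the characters $\chi_f$, $f\in\mathcal{F}_d$, are pairwise distinct; and every primitive Dirichlet character $\chi$ modulo $x^{d+1}$ with $\chi^p$ trivial is of the form $\chi=\chi_f$ for some $f\in\mathcal{F}_d$.
   Context: $\mathcal{F}_d$ denotes the set of polynomials $f=\sum_{i=0}^d a_ix^i\in\mathbb{F}_q[x]$ with $a_d\neq 0$ and $a_i=0$ for every $i\ge 0$ divisible by $p$. A Dirichlet character modulo a monic $Q\in\mathbb{F}_q[x]$ is a function $\chi:\mathbb{F}_q[x]\to\mathbb{C}$ obtained from a character of $(\mathbb{F}_q[x]/Q)^\times$ by $\chi(g)=\chi(g\bmod Q)$ if $(g,Q)=1$ and $\chi(g)=0$ otherwise; it is primitive if there is no proper monic divisor $Q_1$ of $Q$ such that $\chi(g)$ for $g$ coprime to $Q$ depends only on $g\bmod Q_1$; it is trivial if it equals $1$ on all $g$ coprime to $Q$. For $f\in\mathcal{F}_d$, $\chi_f$ is defined by: $\chi_f(g)=0$ if $x\mid g$; otherwise write $g(x)=g(0)\prod_{i=1}^k(1-\alpha_ix)$ with $\alpha_i$ in an algebraic closure of $\mathbb{F}_q$, and set $\chi_f(g)=\psi\left(\mathrm{Tr}_{\mathbb{F}_q/\mathbb{F}_p}\sum_{i=1}^kf(\alpha_i)\right)$ (here $\sum_i f(\alpha_i)\in\mathbb{F}_q$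 and depends only on $g\bmod x^{d+1}$, so $\chi_f$ is a Dirichlet character modulo $x^{d+1}$). *)

theory Defs
  imports Complex_Main "HOL-Library.Cardinality" "HOL-Algebra.Algebraic_Closure_Type"
begin

definition prime_subfield :: "'a::field set" where
  "prime_subfield = range (of_nat :: nat \<Rightarrow> 'a)"

text \<open>A nontrivial additive character of F_p (a homomorphism from (F_p,+) into the
  multiplicative group of nonzero complex numbers, not identically 1).  Only its
  values on the prime subfield matter.\<close>
definition nontrivial_add_char_Fp :: "('a::field \<Rightarrow> complex) \<Rightarrow> bool" where
  "nontrivial_add_char_Fp psi \<longleftrightarrow>
     (\<forall>x\<in>prime_subfield. psi x \<noteq> 0) \<and>
     (\<forall>x\<in>prime_subfield. \<forall>y\<in>prime_subfield. psi (x + y) = psi x * psi y) \<and>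
     (\<exists>x\<in>prime_subfield. psi x \<noteq> 1)"

definition trace_Fq :: "nat \<Rightarrow> nat \<Rightarrow> 'a::field \<Rightarrow> 'a" where
  "trace_Fq p n a = (\<Sum>i<n. a ^ (p ^ i))"

definition F_set :: "nat \<Rightarrow> nat \<Rightarrow> 'a::field poly set" where
  "F_set p d = {f. degree f = d \<and> coeff f d \<noteq> 0 \<and> (\<forall>i. p dvd i \<longrightarrow> coeff f i = 0)}"

text \<open>chi_f(g): zero if x divides g; otherwise write g(x) = g(0) prod (1 - alpha_i x)
  with alpha_i in the algebraic closure (the alpha_i are exactly the roots, with
  multiplicity, of the reflected polynomial x^k g(1/x)), and take
  psi(Tr(sum f(alpha_i))).\<close>
definition chi_f :: "('a::field \<Rightarrow> complex) \<Rightarrow> nat \<Rightarrow> nat \<Rightarrow> 'a poly \<Rightarrow> 'a poly \<Rightarrow> complex" where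
  "chi_f psi p n f g =
     (if [:0, 1:] dvd g then 0
      else psi (trace_Fq p n
             (of_ac (\<Sum>\<alpha>\<in># proots (map_poly to_ac (reflect_poly g)).
                       poly (map_poly to_ac f) \<alpha>))))"

definition dirichlet_char :: "'a::field poly \<Rightarrow> ('a poly \<Rightarrow> complex) \<Rightarrow> bool" where
  "dirichlet_char Q chi \<longleftrightarrow>
     (\<forall>g. \<not> coprime g Q \<longrightarrow> chi g = 0) \<and>
     (\<forall>g. coprime g Q \<longrightarrow> chi g \<noteq> 0) \<and>
     (\<forall>g h. g mod Q = h mod Q \<longrightarrow> chi g = chi h) \<and>
     (\<forall>g h. chi (g * h) = chi g * chi h)"

definition primitive_dirichlet_char :: "'a::field poly \<Rightarrow> ('a poly \<Rightarrow> complex) \<Rightarrow> bool" where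
  "primitive_dirichlet_char Q chi \<longleftrightarrow> dirichlet_char Q chi \<and>
     \<not> (\<exists>Q1. lead_coeff Q1 = 1 \<and> Q1 dvd Q \<and> Q1 \<noteq> Q \<and>
            (\<forall>g h. coprime g Q \<longrightarrow> coprime h Q \<longrightarrow> g mod Q1 = h mod Q1 \<longrightarrow> chi g = chi h))"

definition trivial_char :: "'a::field poly \<Rightarrow> ('a poly \<Rightarrow> complex) \<Rightarrow> bool" where
  "trivial_char Q chi \<longleftrightarrow> (\<forall>g. coprime g Q \<longrightarrow> chi g = 1)"

end

theory Submission imports Defs "HOL-Number_Theory.Residues"
begin

text \<open>
  Write \<open>g = g(0) \<Prod>\<^sub>i (1 - \<alpha>\<^sub>i x)\<close> and \<open>s\<^sub>k(g) = \<Sum>\<^sub>i \<alpha>\<^sub>i\<^sup>k\<close>. Newton's identities compute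
  \<open>s\<^sub>k(g)\<close> from the coefficients of \<open>g\<close>: it lies in \<open>\<bbbF>\<^sub>q\<close>, depends only on \<open>g mod x\<^sup>k\<^sup>+\<^sup>1\<close> and is
  additive in \<open>g\<close>. Hence \<open>\<chi>\<^sub>f(g) = \<psi>(Tr \<Sum>\<^sub>k f\<^sub>k s\<^sub>k(g))\<close> is a character modulo \<open>x\<^sup>d\<^sup>+\<^sup>1\<close>. The power
  sums of \<open>1 + c x\<^sup>K\<close> vanish below \<open>K\<close> and equal \<open>-K c\<close> at \<open>K\<close>; as the trace form is
  nondegenerate and \<open>p \<nmid> K\<close>, testing on these polynomials shows that \<open>\<chi>\<^sub>f\<close> is primitive
  (\<open>K = d\<close>) and that it determines \<open>f\<close> (\<open>K\<close> the top degree in which two \<open>f\<close> differ).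

  Conversely, if \<open>\<chi>\<^sup>p\<close> is trivial then \<open>\<chi> = \<psi> \<circ> dlog\<close> with \<open>dlog\<close> additive and \<open>\<bbbF>\<^sub>p\<close>-valued. \<open>dlog g\<close>
  depends only on the power sums \<open>s\<^sub>k(g)\<close> with \<open>k \<le> d\<close>, \<open>p \<nmid> k\<close>: if these vanish, so do all
  \<open>s\<^sub>k(g)\<close>, \<open>k \<le> d\<close> (as \<open>s\<^sub>p\<^sub>m = s\<^sub>m\<^sup>p\<close>), hence the coefficients of \<open>g\<close> in those degrees, so
  \<open>g \<equiv> h\<^sup>p\<close> and \<open>dlog g = p dlog h = 0\<close>. Every additive map \<open>\<bbbF>\<^sub>q \<rightarrow> \<bbbF>\<^sub>p\<close> is \<open>x \<mapsto> Tr(a x)\<close>,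
  so \<open>dlog g = Tr \<Sum>\<^sub>k a\<^sub>k s\<^sub>k(g)\<close>, i.e. \<open>\<chi> = \<chi>\<^sub>f\<close> for \<open>f = \<Sum>\<^sub>k a\<^sub>k x\<^sup>k\<close>; primitivity forces \<open>a\<^sub>d \<noteq> 0\<close>.
\<close>

section \<open>Polynomials modulo powers of \<open>x\<close>\<close>

lemma X_power_eq_monom: "[:0, 1::'a::comm_semiring_1:] ^ m = monom 1 m"
  by (simp add: monom_altdef)

lemma X_dvd_iff_coeff_0: "[:0, 1::'a::comm_ring_1:] dvd g \<longleftrightarrow> coeff g 0 = 0"
  using dvd_iff_poly_eq_0[of 0 g] by (simp add: poly_0_coeff_0)

lemma mod_monom_eq_iff:
  "g mod monom 1 m = h mod monom 1 m \<longleftrightarrow> (\<forall>i<m. coeff g i = coeff (h :: 'a::field poly) i)"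
  by (simp add: mod_eq_dvd_iff monom_1_dvd_iff')

text \<open>Write \<open>g = c (1 - s)\<close> with \<open>x | s\<close> and truncate the geometric series for \<open>1/(1 - s)\<close>.\<close>
lemma exists_inverse_mod_X_power:
  fixes g :: "'a::field poly"
  assumes g0: "coeff g 0 \<noteq> 0"
  shows "\<exists>u. monom 1 m dvd g * u - 1"
proof -
  define c where "c = coeff g 0"
  have c0: "c \<noteq> 0"
    using g0 by (simp add: c_def)
  define s where "s = smult (- inverse c) (g - [:c:])"
  have g_eq: "g = smult c (1 - s)"
    using c0 by (simp add: s_def smult_diff_right one_pCons)
  have "[:0, 1:] dvd s"
    by (simp add: X_dvd_iff_coeff_0 s_def c_def)
  hence s_dvd: "monom 1 m dvd s ^ m"
    by (metis X_power_eq_monom dvd_power_same)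
  have "g * smult (inverse c) (\<Sum>i<m. s ^ i) = (1 - s) * (\<Sum>i<m. s ^ i)"
    using c0 by (simp add: g_eq)
  also have "\<dots> = 1 - s ^ m"
    by (rule one_diff_power_eq[symmetric])
  finally have "monom 1 m dvd g * smult (inverse c) (\<Sum>i<m. s ^ i) - 1"
    using s_dvd by simp
  thus ?thesis ..
qed

lemma coprime_X_power_iff:
  assumes "0 < m"
  shows "coprime g ([:0, 1::'a::field:] ^ m) \<longleftrightarrow> coeff g 0 \<noteq> 0"
proof
  assume "coprime g ([:0, 1:] ^ m)"
  moreover have "[:0, 1::'a:] dvd [:0, 1:] ^ m"
    using assms by (intro dvd_power) auto
  moreover have "\<not> is_unit [:0, 1::'a:]"
    by (simp add: is_unit_iff_degree)
  ultimately show "coeff g 0 \<noteq> 0"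
    using coprime_common_divisor X_dvd_iff_coeff_0 by blast
next
  assume "coeff g 0 \<noteq> 0"
  then obtain u where "monom 1 m dvd g * u - 1"
    using exists_inverse_mod_X_power by blast
  then obtain v where v: "g * u - 1 = [:0, 1:] ^ m * v"
    by (auto simp: X_power_eq_monom elim!: dvdE)
  show "coprime g ([:0, 1::'a:] ^ m)"
  proof (rule coprimeI)
    fix c assume "c dvd g" "c dvd [:0, 1::'a:] ^ m"
    hence "c dvd g * u - [:0, 1:] ^ m * v"
      by (intro dvd_diff dvd_mult2 dvd_mult2)
    thus "is_unit c"
      by (simp flip: v)
  qed
qed

lemma monic_proper_dvd_X_power:
  assumes Q: "lead_coeff Q = 1" "Q dvd [:0, 1::'a::field:] ^ Suc d" "Q \<noteq> [:0, 1:] ^ Suc d"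
  shows "Q dvd [:0, 1:] ^ d"
proof -
  obtain R where R: "[:0, 1::'a:] ^ Suc d = Q * R"
    using Q(2) by (elim dvdE)
  show ?thesis
  proof (cases "coeff R 0 = 0")
    case True
    then obtain R' where "R = [:0, 1:] * R'"
      using X_dvd_iff_coeff_0[of R] by (auto elim!: dvdE)
    hence "[:0, 1:] * [:0, 1::'a:] ^ d = [:0, 1:] * (Q * R')"
      using R by (simp add: algebra_simps)
    hence "[:0, 1::'a:] ^ d = Q * R'"
      by (subst (asm) mult_cancel_left) simp
    thus ?thesis by simp
  next
    case False
    \<comment> \<open>then \<open>R\<close> is a unit, and comparing leading coefficients forces \<open>R = 1\<close>\<close>
    have "coprime R ([:0, 1::'a:] ^ Suc d)"
      using False coprime_X_power_iff[of "Suc d" R] by simp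
    moreover have "R dvd [:0, 1::'a:] ^ Suc d"
      using R by simp
    ultimately have "is_unit R"
      by (rule coprime_common_divisor[OF _ dvd_refl])
    hence "degree R = 0"
      by (metis is_unit_iff_degree not_is_unit_0)
    then obtain c where c: "R = [:c:]"
      by (elim degree_eq_zeroE)
    have "lead_coeff ([:0, 1::'a:] ^ Suc d) = 1"
      by (simp add: lead_coeff_power)
    hence "lead_coeff (Q * R) = 1"
      unfolding R .
    hence "c = 1"
      using Q(1) c by (cases "c = 0") (simp_all add: lead_coeff_mult)
    hence "Q = [:0, 1:] ^ Suc d"
      using R c by simp
    thus ?thesis
      using Q(3) by simp
  qed
qed

section \<open>Power sums of inverse roots\<close>

text \<open>For \<open>g = g(0) \<Prod>\<^sub>i (1 - \<alpha>\<^sub>i x)\<close>, Newton's identities express the power sums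
  \<open>\<Sum>\<^sub>i \<alpha>\<^sub>i\<^sup>k\<close> through the coefficients of \<open>g\<close>; this recursion computes them inside the
  base field for \<open>k \<ge> 1\<close> (see \<open>to_ac_newton_sum\<close>); its value at \<open>k = 0\<close> is \<open>0\<close>.\<close>
function newton_sum :: "'a::field poly \<Rightarrow> nat \<Rightarrow> 'a" where
  "newton_sum g k = (if k = 0 then 0 else
     (- of_nat k * coeff g k - (\<Sum>i\<in>{1..<k}. coeff g i * newton_sum g (k - i))) / coeff g 0)"
  by pat_completeness auto
termination by (relation "measure snd") auto

declare newton_sum.simps [simp del]

definition inv_roots :: "'a::field poly \<Rightarrow> 'a alg_closure multiset" where
  "inv_roots g = proots (map_poly to_ac (reflect_poly g))"

definition inv_roots_power_sum :: "'a::field poly \<Rightarrow> nat \<Rightarrow> 'a alg_closure" where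
  "inv_roots_power_sum g k = (\<Sum>\<alpha>\<in>#inv_roots g. \<alpha> ^ k)"

definition power_sum_poly :: "nat \<Rightarrow> 'a::field multiset \<Rightarrow> 'a poly" where
  "power_sum_poly N M = (\<Sum>k\<in>{1..N}. monom (\<Sum>a\<in>#M. a ^ k) k)"

lemma coeff_power_sum_poly:
  "coeff (power_sum_poly N M) k = (if 1 \<le> k \<and> k \<le> N then (\<Sum>a\<in>#M. a ^ k) else 0)"
  by (simp add: power_sum_poly_def coeff_sum coeff_monom)

lemma power_sum_poly_add_mset:
  "power_sum_poly N (add_mset a M) = (\<Sum>k\<in>{1..N}. monom (a ^ k) k) + power_sum_poly N M"
  by (simp add: power_sum_poly_def sum.distrib[symmetric] add_monom[symmetric])

lemma one_minus_monom_mult_geometric_poly: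
  "(1 - monom (a::'a::comm_ring_1) 1) * (\<Sum>k\<in>{1..N}. monom (a ^ k) k) = monom a 1 - monom (a ^ Suc N) (Suc N)"
proof (induction N)
  case 0
  then show ?case by simp
next
  case (Suc N)
  have "(1 - monom a 1) * (\<Sum>k\<in>{1..Suc N}. monom (a ^ k) k) =
     (1 - monom a 1) * (\<Sum>k\<in>{1..N}. monom (a ^ k) k) + monom (a ^ Suc N) (Suc N)
       - monom a 1 * monom (a ^ Suc N) (Suc N)"
    by (simp add: algebra_simps)
  also have "monom a 1 * monom (a ^ Suc N) (Suc N) = monom (a ^ Suc (Suc N)) (Suc (Suc N))"
    by (simp add: mult_monom)
  finally show ?case
    using Suc by simp
qed

text \<open>Newton's identities as a congruence: if \<open>G = c \<Prod>\<^sub>a (1 - a x)\<close>, the logarithmic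
  derivative satisfies \<open>x G'/G = - \<Sum>\<^sub>k (\<Sum>\<^sub>a a\<^sup>k) x\<^sup>k\<close>.\<close>
lemma monom_dvd_newton_identity:
  fixes c :: "'a::field"
  shows "monom 1 (Suc N) dvd monom 1 1 * pderiv (smult c (\<Prod>a\<in>#M. 1 - monom a 1))
           + smult c (\<Prod>a\<in>#M. 1 - monom a 1) * power_sum_poly N M"
proof (induction M)
  case empty
  then show ?case by (simp add: power_sum_poly_def)
next
  case (add a M)
  define H where "H = smult c (\<Prod>a\<in>#M. 1 - monom a 1)"
  define L where "L = (1 - monom a 1 :: 'a poly)"
  have H': "smult c (\<Prod>a\<in>#add_mset a M. 1 - monom a 1) = L * H"
    by (simp add: H_def L_def)
  have dL: "pderiv L = - monom a 0"
    by (simp add: L_def pderiv_monom pderiv_diff one_pCons pderiv_pCons)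
  have "monom 1 1 * pderiv (L * H) + L * H * power_sum_poly N (add_mset a M)
     = L * (monom 1 1 * pderiv H + H * power_sum_poly N M)
       + H * (L * (\<Sum>k\<in>{1..N}. monom (a ^ k) k) - monom a 1)"
    by (simp add: pderiv_mult dL power_sum_poly_add_mset algebra_simps mult_monom)
  also have "L * (\<Sum>k\<in>{1..N}. monom (a ^ k) k) - monom a 1 = - monom (a ^ Suc N) (Suc N)"
    using one_minus_monom_mult_geometric_poly[of a N] by (simp add: L_def)
  also have "monom (a ^ Suc N) (Suc N) = monom 1 (Suc N) * [:a ^ Suc N:]"
    by (simp add: monom_altdef smult_monom)
  finally have eq: "monom 1 1 * pderiv (L * H) + L * H * power_sum_poly N (add_mset a M)
     = L * (monom 1 1 * pderiv H + H * power_sum_poly N M)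
       - H * (monom 1 (Suc N) * [:a ^ Suc N:])"
    by simp
  have "monom 1 (Suc N) dvd L * (monom 1 1 * pderiv H + H * power_sum_poly N M)"
    using add.IH by (simp add: H_def)
  moreover have "monom 1 (Suc N) dvd H * (monom 1 (Suc N) * [:a ^ Suc N:])"
    by (rule dvd_mult, rule dvd_mult2, rule dvd_refl)
  ultimately show ?case
    unfolding H' eq by (rule dvd_diff)
qed

lemma newton_identity_coeff:
  fixes G :: "'a::field poly"
  assumes dvd: "monom 1 (Suc N) dvd monom 1 1 * pderiv G + G * power_sum_poly N M"
    and k: "1 \<le> k" "k \<le> N"
  shows "of_nat k * coeff G k + (\<Sum>i<k. coeff G i * (\<Sum>a\<in>#M. a ^ (k - i))) = 0"
proof -
  have "coeff (G * power_sum_poly N M) k = (\<Sum>i\<le>k. coeff G i * coeff (power_sum_poly N M) (k - i))"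
    by (rule coeff_mult)
  also have "\<dots> = (\<Sum>i<k. coeff G i * coeff (power_sum_poly N M) (k - i))"
    by (simp add: lessThan_Suc_atMost[symmetric] coeff_power_sum_poly)
  also have "\<dots> = (\<Sum>i<k. coeff G i * (\<Sum>a\<in>#M. a ^ (k - i)))"
    using k by (intro sum.cong) (auto simp: coeff_power_sum_poly)
  finally have "coeff (G * power_sum_poly N M) k = \<dots>" .
  moreover have "coeff (monom 1 1 * pderiv G + G * power_sum_poly N M) k = 0"
    using dvd k by (simp add: monom_1_dvd_iff')
  moreover have "coeff (monom 1 1 * pderiv G) k = of_nat k * coeff G k"
    using k by (simp add: coeff_monom_mult coeff_pderiv)
  ultimately show ?thesis
    by simp
qed

lemma degree_map_to_ac [simp]: "degree (map_poly to_ac q) = degree q"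
  by (rule degree_map_poly) simp

lemma coeff_map_to_ac [simp]: "coeff (map_poly to_ac q) i = to_ac (coeff q i)"
  by (simp add: coeff_map_poly)

lemma map_to_ac_reflect: "map_poly to_ac (reflect_poly q) = reflect_poly (map_poly to_ac q)"
  by (rule poly_eqI) (simp add: coeff_reflect_poly)

lemma map_to_ac_mult: "map_poly to_ac (p * q) = map_poly to_ac p * map_poly to_ac q"
  by (rule poly_eqI) (simp add: coeff_mult to_ac_sum)

lemma map_to_ac_eq_0_iff [simp]: "map_poly to_ac q = 0 \<longleftrightarrow> q = 0"
  by (metis degree_0 coeff_map_to_ac leading_coeff_0_iff to_ac_eq_0_iff degree_map_to_ac)

lemma proots_prod_linear: "proots (\<Prod>x\<in>#B. [:-x, 1::'a::field:]) = B"
proof (induction B)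
  case (add x B)
  have "(\<Prod>x\<in>#B. [:-x, 1::'a:]) \<noteq> 0"
    by (auto simp: prod_mset_zero_iff)
  hence "proots ([:-x, 1:] * (\<Prod>x\<in>#B. [:-x, 1::'a:])) = add_mset x B"
    using add proots_linear_factor[of "-x"] by (subst proots_mult) auto
  thus ?case by simp
qed simp

lemma reflect_poly_prod_mset:
  "reflect_poly (\<Prod>a\<in>#M. f a) = (\<Prod>a\<in>#M. reflect_poly (f a :: 'a::field poly))"
  by (induction M) (simp_all add: reflect_poly_mult)

lemma reflect_poly_linear: "reflect_poly [:-a, 1:] = 1 - monom (a::'a::field) 1"
  by (rule poly_eqI) (auto simp: coeff_reflect_poly coeff_monom coeff_pCons split: nat.splits)

lemma map_to_ac_eq_prod_inv_roots:
  fixes g :: "'a::field poly"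
  assumes g0: "coeff g 0 \<noteq> 0"
  shows "\<exists>c. map_poly to_ac g = smult c (\<Prod>\<alpha>\<in>#inv_roots g. 1 - monom \<alpha> 1)"
proof -
  define A where "A = map_poly to_ac (reflect_poly g)"
  have "A \<noteq> 0"
    using g0 by (auto simp: A_def)
  then obtain B where B: "A = smult (lead_coeff A) (\<Prod>x\<in>#B. [:-x, 1:])"
    using alg_closed_imp_factorization by blast
  have lc: "lead_coeff A \<noteq> 0"
    using \<open>A \<noteq> 0\<close> by simp
  have "inv_roots g = B"
    using proots_prod_linear[of B]
    unfolding inv_roots_def A_def[symmetric] by (subst B) (simp only: proots_smult[OF lc])
  moreover have "map_poly to_ac g = reflect_poly A"
    using g0 by (simp add: A_def map_to_ac_reflect)
  moreover have "reflect_poly A = smult (lead_coeff A) (\<Prod>x\<in>#B. 1 - monom x 1)"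
    by (subst B) (simp add: reflect_poly_smult reflect_poly_prod_mset reflect_poly_linear)
  ultimately show ?thesis
    by metis
qed

lemma inv_roots_power_sum_rec:
  fixes g :: "'a::field poly"
  assumes g0: "coeff g 0 \<noteq> 0" and k: "1 \<le> k"
  shows "of_nat k * to_ac (coeff g k)
           + (\<Sum>i<k. to_ac (coeff g i) * inv_roots_power_sum g (k - i)) = 0"
proof -
  obtain c where G: "map_poly to_ac g = smult c (\<Prod>\<alpha>\<in>#inv_roots g. 1 - monom \<alpha> 1)"
    using map_to_ac_eq_prod_inv_roots[OF g0] by blast
  have "monom 1 (Suc k) dvd monom 1 1 * pderiv (map_poly to_ac g)
                             + map_poly to_ac g * power_sum_poly k (inv_roots g)"
    unfolding G by (rule monom_dvd_newton_identity)
  from newton_identity_coeff[OF this k order_refl] show ?thesis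
    by (simp add: inv_roots_power_sum_def)
qed

lemma to_ac_newton_sum:
  fixes g :: "'a::field poly"
  assumes g0: "coeff g 0 \<noteq> 0"
  shows "1 \<le> k \<Longrightarrow> to_ac (newton_sum g k) = inv_roots_power_sum g k"
proof (induction k rule: less_induct)
  case (less k)
  let ?P = "inv_roots_power_sum g"
  have "{..<k} = insert 0 {1..<k}"
    using less.prems by auto
  hence "(\<Sum>i<k. to_ac (coeff g i) * ?P (k - i)) =
      to_ac (coeff g 0) * ?P k + (\<Sum>i\<in>{1..<k}. to_ac (coeff g i) * ?P (k - i))"
    by simp
  with inv_roots_power_sum_rec[OF g0 less.prems]
  have "to_ac (coeff g 0) * ?P k
      + (of_nat k * to_ac (coeff g k) + (\<Sum>i\<in>{1..<k}. to_ac (coeff g i) * ?P (k - i))) = 0"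
    by (simp add: add.left_commute)
  hence "to_ac (coeff g 0) * ?P k =
      - (of_nat k * to_ac (coeff g k) + (\<Sum>i\<in>{1..<k}. to_ac (coeff g i) * ?P (k - i)))"
    by (rule eq_neg_iff_add_eq_0[THEN iffD2])
  moreover have "(\<Sum>i\<in>{1..<k}. to_ac (coeff g i) * to_ac (newton_sum g (k - i)))
      = (\<Sum>i\<in>{1..<k}. to_ac (coeff g i) * ?P (k - i))"
    using less.IH by (intro sum.cong) auto
  moreover have "to_ac (coeff g 0) \<noteq> 0"
    using g0 by simp
  ultimately show ?case
    using less.prems
    by (subst newton_sum.simps) (simp add: to_ac_sum divide_eq_eq mult.commute)
qed

lemma inv_roots_mult:
  assumes "coeff g 0 \<noteq> 0" "coeff h 0 \<noteq> 0"
  shows "inv_roots (g * h) = inv_roots g + inv_roots (h :: 'a::field poly)"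
proof -
  have "g \<noteq> 0" "h \<noteq> 0"
    using assms by auto
  thus ?thesis
    unfolding inv_roots_def by (simp add: reflect_poly_mult map_to_ac_mult proots_mult)
qed

lemma newton_sum_mult:
  assumes "coeff g 0 \<noteq> 0" "coeff h 0 \<noteq> 0"
  shows "newton_sum (g * h) k = newton_sum g k + newton_sum (h :: 'a::field poly) k"
proof (cases "k = 0")
  case False
  have "coeff (g * h) 0 \<noteq> 0"
    using assms by (simp add: coeff_mult_0)
  hence "to_ac (newton_sum (g * h) k) = to_ac (newton_sum g k + newton_sum h k)"
    using assms False
    by (simp add: to_ac_newton_sum inv_roots_power_sum_def inv_roots_mult)
  thus ?thesis
    by (simp only: to_ac_eq_iff)
qed (simp add: newton_sum.simps)

lemma newton_sum_cong:
  "(\<And>i. i \<le> k \<Longrightarrow> coeff g i = coeff h i) \<Longrightarrow> newton_sum g k = newton_sum h k"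
proof (induction k rule: less_induct)
  case (less k)
  have "(\<Sum>i\<in>{1..<k}. coeff g i * newton_sum g (k - i))
      = (\<Sum>i\<in>{1..<k}. coeff h i * newton_sum h (k - i))"
    using less by (intro sum.cong) auto
  moreover have "coeff g k = coeff h k" "coeff g 0 = coeff h 0"
    by (auto intro: less.prems)
  ultimately show ?case
    by (subst (1 2) newton_sum.simps) (simp only:)
qed

lemma newton_sum_1 [simp]: "newton_sum 1 k = 0"
proof (cases "k = 0")
  case False
  hence "to_ac (newton_sum 1 k) = 0"
    by (simp add: to_ac_newton_sum inv_roots_power_sum_def inv_roots_def)
  thus ?thesis
    by simp
qed (simp add: newton_sum.simps)

lemma newton_sum_one_plus_monom:
  assumes "1 \<le> K" "k \<le> K"
  shows "newton_sum (1 + monom c K) k = (if k = K then - of_nat K * c else 0)"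
  using assms(2)
proof (induction k rule: less_induct)
  case (less k)
  have "coeff (1 + monom c K) i = 0" if "0 < i" "i < K" for i
    using that by (simp add: coeff_monom)
  hence "(\<Sum>i\<in>{1..<k}. coeff (1 + monom c K) i * newton_sum (1 + monom c K) (k - i)) = 0"
    using less.prems by (intro sum.neutral) auto
  thus ?case
    using assms(1) less.prems by (subst newton_sum.simps) (auto simp: coeff_monom)
qed

lemma sum_newton_sum_one_plus_monom:
  assumes "1 \<le> K" "K \<le> d" and "\<And>k. K < k \<Longrightarrow> a k = 0"
  shows "(\<Sum>k\<in>{1..d}. a k * newton_sum (1 + monom c K) k) = - of_nat K * a K * c"
proof -
  have "(\<Sum>k\<in>{1..d}. a k * newton_sum (1 + monom c K) k)
      = a K * newton_sum (1 + monom c K) K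
        + (\<Sum>k\<in>{1..d} - {K}. a k * newton_sum (1 + monom c K) k)"
    using assms(1,2) by (subst sum.remove[of _ K]) auto
  also have "(\<Sum>k\<in>{1..d} - {K}. a k * newton_sum (1 + monom c K) k) = 0"
  proof (intro sum.neutral ballI)
    fix k
    assume "k \<in> {1..d} - {K}"
    thus "a k * newton_sum (1 + monom c K) k = 0"
      using assms by (cases "k < K") (simp_all add: newton_sum_one_plus_monom)
  qed
  finally show ?thesis
    using assms(1) by (simp add: newton_sum_one_plus_monom)
qed

lemma sum_mset_power_CHAR:
  assumes "prime CHAR('a::comm_semiring_1)"
  shows "(\<Sum>a\<in>#M. f a :: 'a) ^ CHAR('a) = (\<Sum>a\<in>#M. f a ^ CHAR('a))"
proof (induction M)
  case empty
  show ?case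
    using assms prime_gt_0_nat by (simp add: power_0_left)
next
  case (add x M)
  then show ?case
    using assms by (simp add: freshmans_dream)
qed

lemma newton_sum_CHAR_mult:
  fixes g :: "'a::field poly"
  assumes "prime CHAR('a)" and g0: "coeff g 0 \<noteq> 0" and m: "1 \<le> m"
  shows "newton_sum g (CHAR('a) * m) = newton_sum g m ^ CHAR('a)"
proof -
  have "CHAR('a alg_closure) = CHAR('a)"
    by simp
  hence "(\<Sum>\<alpha>\<in>#inv_roots g. \<alpha> ^ m) ^ CHAR('a) = (\<Sum>\<alpha>\<in>#inv_roots g. (\<alpha> ^ m) ^ CHAR('a))"
    using assms(1) sum_mset_power_CHAR[where 'a="'a alg_closure"] by metis
  moreover have "1 \<le> CHAR('a) * m"
    using m prime_gt_0_nat[OF assms(1)] by simp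
  ultimately have "to_ac (newton_sum g (CHAR('a) * m)) = to_ac (newton_sum g m ^ CHAR('a))"
    using g0 m
    by (simp add: to_ac_newton_sum inv_roots_power_sum_def power_mult[symmetric] mult.commute)
  thus ?thesis
    by (simp only: to_ac_eq_iff)
qed

section \<open>Finite fields, the prime subfield and the trace\<close>

locale finite_field_order =
  fixes p n :: nat
  assumes prime_p: "prime p" and card_UNIV: "CARD('a::{field,finite}) = p ^ n"
begin

lemma p_gt_1: "p > 1"
  using prime_p prime_gt_1_nat by blast

lemma CHAR_eq: "CHAR('a) = p"
proof -
  have "CHAR('a) > 0"
    by (simp add: finite_imp_CHAR_pos)
  hence "prime CHAR('a)"
    using prime_CHAR_semidom by blast
  moreover have "CHAR('a) dvd p ^ n"
    using CHAR_dvd_CARD[where 'a='a] card_UNIV by simp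
  ultimately show ?thesis
    using prime_p by (metis prime_dvd_power primes_dvd_imp_eq)
qed

lemma of_nat_p_eq_0 [simp]: "of_nat p = (0::'a)"
  using of_nat_CHAR[where 'a='a] CHAR_eq by simp

lemma of_nat_eq_0_iff: "(of_nat k :: 'a) = 0 \<longleftrightarrow> p dvd k"
  using of_nat_eq_0_iff_char_dvd[where 'a='a] CHAR_eq by simp

lemma n_pos: "n > 0"
proof (rule ccontr)
  assume "\<not> n > 0"
  hence "CARD('a) = 1"
    using card_UNIV by simp
  moreover have "card {0::'a, 1} \<le> CARD('a)"
    by (intro card_mono) auto
  ultimately show False
    by simp
qed

lemma power_card_eq_self: "(x::'a) ^ (p ^ n) = x"
proof (cases "x = 0")
  case False
  define U where "U = UNIV - {0::'a}"
  have "bij_betw ((*) x) U U"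
    using False unfolding U_def
    by (intro bij_betwI[where g="\<lambda>y. y / x"]) auto
  hence "(\<Prod>y\<in>U. x * y) = \<Prod>U"
    by (rule prod.reindex_bij_betw)
  hence "x ^ card U * \<Prod>U = 1 * \<Prod>U"
    by (simp add: prod.distrib)
  moreover have "\<Prod>U \<noteq> 0"
    by (simp add: U_def)
  ultimately have "x ^ card U = 1"
    by (subst (asm) mult_cancel_right) simp
  moreover have "p ^ n = Suc (card U)"
    using card_UNIV p_gt_1 by (simp add: U_def card_Diff_singleton)
  ultimately show ?thesis
    by simp
qed (use n_pos p_gt_1 in simp)

lemma frobenius_add: "(x + y :: 'a) ^ p = x ^ p + y ^ p"
  by (rule freshmans_dream) (auto simp: CHAR_eq prime_p)

lemma frobenius_sum: "(sum f A :: 'a) ^ p = (\<Sum>i\<in>A. f i ^ p)"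
  by (rule freshmans_dream_sum) (auto simp: CHAR_eq prime_p)

lemma of_nat_mod_p: "(of_nat m :: 'a) = of_nat (m mod p)"
proof -
  have "(of_nat m :: 'a) = of_nat (m div p * p + m mod p)"
    by simp
  also have "\<dots> = of_nat (m mod p)"
    by (simp only: of_nat_add of_nat_mult of_nat_p_eq_0) simp
  finally show ?thesis .
qed

lemma prime_subfield_eq: "prime_subfield = (of_nat ` {..<p} :: 'a set)"
  unfolding prime_subfield_def
proof
  show "range of_nat \<subseteq> (of_nat ` {..<p} :: 'a set)"
  proof
    fix y :: 'a
    assume "y \<in> range of_nat"
    then obtain m where "y = of_nat (m mod p)"
      using of_nat_mod_p by auto
    moreover have "m mod p < p"
      using p_gt_1 by simp
    ultimately show "y \<in> of_nat ` {..<p}"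
      by auto
  qed
qed auto

lemma inj_on_of_nat_prime_subfield: "inj_on (of_nat :: nat \<Rightarrow> 'a) {..<p}"
proof
  fix a b
  assume "a \<in> {..<p}" "b \<in> {..<p}" "(of_nat a :: 'a) = of_nat b"
  thus "a = b"
    using of_nat_eq_iff_cong_CHAR[where 'a='a] CHAR_eq by (simp add: cong_def)
qed

lemma card_prime_subfield: "card (prime_subfield :: 'a set) = p"
  using prime_subfield_eq inj_on_of_nat_prime_subfield card_image by fastforce

lemma of_nat_in_prime_subfield [simp]: "(of_nat m :: 'a) \<in> prime_subfield"
  by (simp add: prime_subfield_def)

lemma zero_in_prime_subfield [simp]: "(0::'a) \<in> prime_subfield"
  using of_nat_in_prime_subfield[of 0] by simp

lemma prime_subfield_iff: "(x::'a) \<in> prime_subfield \<longleftrightarrow> x ^ p = x"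
proof -
  have "(of_nat m :: 'a) ^ p = of_nat m" for m
    by (induction m) (use p_gt_1 in \<open>simp_all add: frobenius_add\<close>)
  hence fixed: "y ^ p = y" if "y \<in> prime_subfield" for y :: 'a
    using that by (auto simp: prime_subfield_def)
  \<comment> \<open>the \<open>p\<close> elements of the prime subfield already exhaust the roots of \<open>X\<^sup>p - X\<close>\<close>
  define P :: "'a poly" where "P = monom 1 p - monom 1 1"
  have "coeff P p = 1"
    using p_gt_1 by (simp add: P_def coeff_monom)
  hence P0: "P \<noteq> 0"
    by auto
  have "degree P \<le> p"
    unfolding P_def using p_gt_1 by (intro degree_diff_le) (auto simp: degree_monom_eq)
  moreover have roots: "{y. poly P y = 0} = {y::'a. y ^ p = y}"
    by (auto simp: P_def poly_monom)
  ultimately have "card {y::'a. y ^ p = y} \<le> p"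
    using card_poly_roots_bound[OF P0] by simp
  moreover have sub: "prime_subfield \<subseteq> {y::'a. y ^ p = y}"
    using fixed by auto
  moreover have "card (prime_subfield :: 'a set) \<le> card {y::'a. y ^ p = y}"
    using sub by (intro card_mono) auto
  ultimately have "prime_subfield = {y::'a. y ^ p = y}"
    using card_prime_subfield by (intro card_subset_eq) auto
  thus ?thesis
    by auto
qed

lemma prime_subfield_add: "x \<in> prime_subfield \<Longrightarrow> y \<in> prime_subfield \<Longrightarrow> (x + y :: 'a) \<in> prime_subfield"
  by (simp add: prime_subfield_iff frobenius_add)

lemma prime_subfield_mult: "x \<in> prime_subfield \<Longrightarrow> y \<in> prime_subfield \<Longrightarrow> (x * y :: 'a) \<in> prime_subfield"
  by (simp add: prime_subfield_iff power_mult_distrib)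

lemma prime_subfield_uminus: "x \<in> prime_subfield \<Longrightarrow> (- x :: 'a) \<in> prime_subfield"
  using minus_power_prime_CHAR[of p x] by (simp add: prime_subfield_iff CHAR_eq prime_p)

lemma prime_subfield_diff: "x \<in> prime_subfield \<Longrightarrow> y \<in> prime_subfield \<Longrightarrow> (x - y :: 'a) \<in> prime_subfield"
  using prime_subfield_add[of x "-y"] prime_subfield_uminus[of y] by simp

lemma prime_subfield_inverse: "x \<in> prime_subfield \<Longrightarrow> (inverse x :: 'a) \<in> prime_subfield"
  by (simp add: prime_subfield_iff power_inverse)

lemma pth_root_power_p: "((y::'a) ^ (p ^ (n - 1))) ^ p = y"
proof -
  have "p ^ (n - 1) * p = p ^ n"
    using n_pos by (simp add: power_Suc2[symmetric])
  thus ?thesis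
    by (simp add: power_mult[symmetric] power_card_eq_self)
qed

lemma exists_pth_root_mod_X_power:
  fixes g :: "'a poly"
  assumes "\<And>k. 1 \<le> k \<Longrightarrow> k \<le> d \<Longrightarrow> \<not> p dvd k \<Longrightarrow> coeff g k = 0"
  shows "\<exists>h. \<forall>i\<le>d. coeff (h ^ p) i = coeff g i"
proof -
  define h where "h = (\<Sum>j\<le>d. monom (coeff g (p * j) ^ (p ^ (n - 1))) j)"
  have "h ^ p = (\<Sum>j\<le>d. monom (coeff g (p * j)) (j * p))"
    unfolding h_def
    by (subst freshmans_dream_sum) (simp_all add: CHAR_eq prime_p monom_power pth_root_power_p[simplified])
  hence coeff_hp: "coeff (h ^ p) i = (\<Sum>j\<le>d. if j * p = i then coeff g (p * j) else 0)" for i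
    by (simp add: coeff_sum coeff_monom)
  have "coeff (h ^ p) i = coeff g i" if i: "i \<le> d" for i
  proof (cases "p dvd i")
    case True
    then obtain j0 where j0: "i = p * j0"
      by (elim dvdE)
    have "j0 \<le> p * j0"
      using p_gt_1 by simp
    hence "j0 \<le> d"
      using i j0 by linarith
    hence "(\<Sum>j\<le>d. if j * p = i then coeff g (p * j) else 0)
        = (\<Sum>j\<in>{j0}. if j * p = i then coeff g (p * j) else 0)"
      using j0 p_gt_1 by (intro sum.mono_neutral_right) auto
    thus ?thesis
      using j0 coeff_hp by (simp add: mult.commute)
  next
    case False
    hence "i \<noteq> 0"
      by (metis dvd_0_right)
    hence "coeff g i = 0"
      using False i assms[of i] by simp
    moreover have "(\<Sum>j\<le>d. if j * p = i then coeff g (p * j) else 0) = 0"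
      using False by (intro sum.neutral) auto
    ultimately show ?thesis
      using coeff_hp by simp
  qed
  thus ?thesis
    by blast
qed

abbreviation tr :: "'a \<Rightarrow> 'a" where
  "tr \<equiv> trace_Fq p n"

lemma trace_add: "tr (x + y) = tr x + tr y"
proof -
  have "(x + y) ^ p ^ i = x ^ p ^ i + y ^ p ^ i" for i
    by (rule freshmans_dream') (auto simp: CHAR_eq prime_p)
  thus ?thesis
    by (simp add: trace_Fq_def sum.distrib)
qed

lemma trace_0 [simp]: "tr 0 = 0"
  using p_gt_1 by (simp add: trace_Fq_def power_0_left)

lemma trace_uminus: "tr (- x) = - tr x"
  using trace_add[of x "- x"] trace_0 by (simp add: minus_unique)

lemma trace_diff: "tr (x - y) = tr x - tr y"
  using trace_add[of x "- y"] trace_uminus[of y] by simp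

lemma trace_sum: "tr (sum f A) = (\<Sum>i\<in>A. tr (f i))"
  by (induction A rule: infinite_finite_induct) (auto simp: trace_add trace_0)

lemma trace_in_prime_subfield: "tr x \<in> prime_subfield"
proof -
  have "tr x ^ p = (\<Sum>i<n. (x ^ p ^ i) ^ p)"
    by (simp add: trace_Fq_def frobenius_sum)
  also have "\<dots> = (\<Sum>i<n. x ^ p ^ Suc i)"
    by (simp add: power_mult[symmetric] mult.commute)
  also have "\<dots> = (\<Sum>i<Suc n. x ^ p ^ i) - x ^ p ^ 0"
    by (subst sum.lessThan_Suc_shift) simp
  also have "\<dots> = tr x"
    by (simp add: trace_Fq_def power_card_eq_self)
  finally show ?thesis
    by (simp add: prime_subfield_iff)
qed

text \<open>The trace is a polynomial of degree \<open>p\<^sup>n\<^sup>-\<^sup>1 < q\<close>, so it cannot vanish on all of \<open>\<bbbF>\<^sub>q\<close>.\<close>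
lemma exists_trace_nonzero: "\<exists>x. tr x \<noteq> 0"
proof (rule ccontr)
  assume "\<not> (\<exists>x. tr x \<noteq> 0)"
  define P :: "'a poly" where "P = (\<Sum>i<n. monom 1 (p ^ i))"
  have "inj (\<lambda>i. p ^ i)"
    using p_gt_1 by (simp add: inj_def power_inject_exp)
  hence "coeff P (p ^ (n - 1)) = (\<Sum>i\<in>{n - 1}. 1)"
    unfolding P_def coeff_sum coeff_monom
    using n_pos by (intro sum.mono_neutral_cong_right) (auto simp: inj_def)
  hence P0: "P \<noteq> 0"
    by auto
  have "degree P \<le> p ^ (n - 1)"
    unfolding P_def
  proof (intro degree_sum_le)
    fix i
    assume "i \<in> {..<n}"
    hence "p ^ i \<le> p ^ (n - 1)"
      using p_gt_1 by (intro power_increasing) auto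
    thus "degree (monom (1::'a) (p ^ i)) \<le> p ^ (n - 1)"
      by (simp add: degree_monom_eq)
  qed simp
  moreover have "{x. poly P x = 0} = UNIV"
    using \<open>\<not> (\<exists>x. tr x \<noteq> 0)\<close> by (auto simp: P_def poly_sum poly_monom trace_Fq_def)
  ultimately have "CARD('a) \<le> p ^ (n - 1)"
    using card_poly_roots_bound[OF P0] by simp
  moreover have "p ^ (n - 1) < p ^ n"
    using p_gt_1 n_pos by (intro power_strict_increasing) auto
  ultimately show False
    using card_UNIV by simp
qed

lemma exists_trace_mult_nonzero: "b \<noteq> 0 \<Longrightarrow> \<exists>c. tr (b * c) \<noteq> 0"
  using exists_trace_nonzero by (metis nonzero_mult_div_cancel_left times_divide_eq_right)

subsection \<open>Additive maps to the prime subfield\<close>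

definition add_subgroup :: "'a set \<Rightarrow> bool" where
  "add_subgroup W \<longleftrightarrow> 0 \<in> W \<and> (\<forall>x\<in>W. \<forall>y\<in>W. x + y \<in> W)"

text \<open>The maps are extended by zero outside \<open>W\<close>, so that they are determined by their values
  on \<open>W\<close>.\<close>
definition Fp_additive_maps :: "'a set \<Rightarrow> ('a \<Rightarrow> 'a) set" where
  "Fp_additive_maps W = {l. (\<forall>x\<in>W. \<forall>y\<in>W. l (x + y) = l x + l y) \<and>
      (\<forall>x\<in>W. l x \<in> prime_subfield) \<and> (\<forall>x. x \<notin> W \<longrightarrow> l x = 0)}"

definition add_subgroup_extend :: "'a set \<Rightarrow> 'a \<Rightarrow> 'a set" where
  "add_subgroup_extend W w = (\<lambda>(x, j). x + of_nat j * w) ` (W \<times> {..<p})"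

lemma finite_Fp_additive_maps: "finite (Fp_additive_maps W)"
  by (rule finite_subset[of _ UNIV]) auto

lemma add_subgroup_of_nat_mult: "add_subgroup W \<Longrightarrow> x \<in> W \<Longrightarrow> of_nat m * x \<in> W"
  by (induction m) (auto simp: add_subgroup_def distrib_right)

lemma add_subgroup_diff:
  assumes "add_subgroup W" "x \<in> W" "y \<in> W"
  shows "x - y \<in> W"
proof -
  have "x + of_nat (p - 1) * y \<in> W"
    using assms add_subgroup_of_nat_mult[of W y "p - 1"] by (simp add: add_subgroup_def)
  moreover have "x - y = x + of_nat (p - 1) * y"
    using p_gt_1 by (simp add: of_nat_diff algebra_simps)
  ultimately show ?thesis
    by (subst \<open>x - y = _\<close>)
qed

lemma additive_0:
  assumes "0 \<in> (W :: 'a set)" "\<forall>x\<in>W. \<forall>y\<in>W. l (x + y) = l x + (l y :: 'a)"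
  shows "l 0 = 0"
  using assms(2)[rule_format, OF assms(1) assms(1), unfolded add.right_neutral]
  by (rule add_cancel_right_right[THEN iffD1])

lemma additive_of_nat_mult:
  assumes l: "\<forall>x\<in>W. \<forall>y\<in>W. l (x + y) = l x + l y" and W: "add_subgroup W" "w \<in> W"
  shows "l (of_nat j * w) = of_nat j * (l w :: 'a)"
proof (induction j)
  case 0
  show ?case
    using additive_0[OF _ l] W(1) by (simp add: add_subgroup_def)
next
  case (Suc j)
  have "l (w + of_nat j * w) = l w + l (of_nat j * w)"
    using l W add_subgroup_of_nat_mult by blast
  thus ?case
    using Suc by (simp add: distrib_right)
qed

lemma card_Fp_additive_maps_zero: "card (Fp_additive_maps {0}) \<le> 1"
proof -
  have "Fp_additive_maps {0} \<subseteq> {\<lambda>x. 0}"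
  proof
    fix l
    assume l: "l \<in> Fp_additive_maps {0}"
    hence "l 0 = 0"
      by (intro additive_0[of "{0}"]) (auto simp: Fp_additive_maps_def)
    hence "l x = 0" for x
      using l by (cases "x = 0") (simp_all add: Fp_additive_maps_def)
    hence "l = (\<lambda>x. 0)"
      by (simp add: fun_eq_iff)
    thus "l \<in> {\<lambda>x. 0}"
      by simp
  qed
  hence "card (Fp_additive_maps {0}) \<le> card {\<lambda>x::'a. 0 :: 'a}"
    by (intro card_mono) auto
  thus ?thesis
    by simp
qed

lemma add_subgroup_extend_mem: "x \<in> W \<Longrightarrow> x + of_nat j * w \<in> add_subgroup_extend W w"
proof -
  assume x: "x \<in> W"
  have "x + of_nat j * w = x + of_nat (j mod p) * w"
    using of_nat_mod_p[of j] by simp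
  moreover have "(x, j mod p) \<in> W \<times> {..<p}"
    using x p_gt_1 by simp
  ultimately show ?thesis
    unfolding add_subgroup_extend_def by force
qed

lemma subset_add_subgroup_extend: "W \<subseteq> add_subgroup_extend W w"
  using add_subgroup_extend_mem[of _ W 0 w] by auto

lemma add_subgroup_add_subgroup_extend:
  assumes W: "add_subgroup W"
  shows "add_subgroup (add_subgroup_extend W w)"
  unfolding add_subgroup_def
proof (intro conjI ballI)
  show "0 \<in> add_subgroup_extend W w"
    using subset_add_subgroup_extend W by (auto simp: add_subgroup_def)
next
  fix a b
  assume "a \<in> add_subgroup_extend W w" "b \<in> add_subgroup_extend W w"
  then obtain x j y k where "a = x + of_nat j * w" "b = y + of_nat k * w" "x \<in> W" "y \<in> W"
    by (auto simp: add_subgroup_extend_def)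
  moreover from this have "a + b = (x + y) + of_nat (j + k) * w"
    by (simp add: algebra_simps)
  moreover have "x + y \<in> W"
    using W \<open>x \<in> W\<close> \<open>y \<in> W\<close> by (simp add: add_subgroup_def)
  ultimately show "a + b \<in> add_subgroup_extend W w"
    using add_subgroup_extend_mem by presburger
qed

lemma card_add_subgroup_extend:
  assumes W: "add_subgroup W" and w: "w \<notin> W"
  shows "card (add_subgroup_extend W w) = p * card W"
proof -
  have "inj_on (\<lambda>(x, j). x + of_nat j * w) (W \<times> {..<p})"
  proof (rule inj_onI, clarify)
    fix x j y k
    assume xy: "x \<in> W" "j < p" "y \<in> W" "k < p" and eq: "x + of_nat j * w = y + of_nat k * w"
    show "x = y \<and> j = k"
    proof (cases "j = k")
      case True
      thus ?thesis
        using eq by simp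
    next
      case False
      \<comment> \<open>otherwise \<open>w\<close> would be an \<open>\<bbbF>\<^sub>p\<close>-multiple of \<open>y - x \<in> W\<close>\<close>
      hence ne: "(of_nat j :: 'a) - of_nat k \<noteq> 0"
        using inj_on_of_nat_prime_subfield xy by (auto simp: inj_on_def)
      have "inverse ((of_nat j :: 'a) - of_nat k) \<in> prime_subfield"
        by (intro prime_subfield_inverse prime_subfield_diff) auto
      then obtain m where m: "inverse ((of_nat j :: 'a) - of_nat k) = of_nat m"
        by (auto simp: prime_subfield_def)
      have "(of_nat j - of_nat k) * w = y - x"
        using eq by (simp add: algebra_simps)
      hence "w = inverse (of_nat j - of_nat k) * (y - x)"
        using ne by (metis left_inverse mult.assoc mult_1_left)
      hence "w = of_nat m * (y - x)"
        using m by simp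
      hence "w \<in> W"
        using add_subgroup_of_nat_mult[OF W add_subgroup_diff[OF W xy(3,1)]] by simp
      thus ?thesis
        using w by simp
    qed
  qed
  hence "card (add_subgroup_extend W w) = card (W \<times> {..<p})"
    unfolding add_subgroup_extend_def by (rule card_image)
  thus ?thesis
    by (simp add: card_cartesian_product)
qed

lemma Fp_additive_maps_extend_eqI:
  assumes W: "add_subgroup W"
    and l: "l \<in> Fp_additive_maps (add_subgroup_extend W w)" "l' \<in> Fp_additive_maps (add_subgroup_extend W w)"
    and eq: "\<And>x. x \<in> W \<Longrightarrow> l x = l' x" "l w = l' w"
  shows "l = l'"
proof
  fix z
  let ?W' = "add_subgroup_extend W w"
  show "l z = l' z"
  proof (cases "z \<in> ?W'")
    case False
    thus ?thesis
      using l by (simp add: Fp_additive_maps_def)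
  next
    case True
    then obtain x j where z: "z = x + of_nat j * w" "x \<in> W"
      by (auto simp: add_subgroup_extend_def)
    have W': "add_subgroup ?W'"
      by (rule add_subgroup_add_subgroup_extend[OF W])
    have w: "w \<in> ?W'"
      using add_subgroup_extend_mem[of 0 W 1 w] W by (simp add: add_subgroup_def)
    have x: "x \<in> ?W'" "of_nat j * w \<in> ?W'"
      using z subset_add_subgroup_extend add_subgroup_of_nat_mult[OF W' w] by auto
    have decomp: "l z = l x + of_nat j * l w" if "l \<in> Fp_additive_maps ?W'" for l
    proof -
      have add: "\<forall>x\<in>?W'. \<forall>y\<in>?W'. l (x + y) = l x + l y"
        using that by (simp add: Fp_additive_maps_def)
      thus ?thesis
        using x additive_of_nat_mult[OF add W' w] z(1) by simp
    qed
    show ?thesis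
      using decomp[OF l(1)] decomp[OF l(2)] eq z(2) by simp
  qed
qed

lemma card_Fp_additive_maps_extend:
  assumes W: "add_subgroup W"
  shows "card (Fp_additive_maps (add_subgroup_extend W w)) \<le> card (Fp_additive_maps W) * p"
proof -
  let ?W' = "add_subgroup_extend W w"
  define restr where "restr = (\<lambda>l::'a \<Rightarrow> 'a. ((\<lambda>x. if x \<in> W then l x else 0), l w))"
  have w: "w \<in> ?W'"
    using add_subgroup_extend_mem[of 0 W 1 w] W by (simp add: add_subgroup_def)
  have "restr ` Fp_additive_maps ?W' \<subseteq> Fp_additive_maps W \<times> prime_subfield"
  proof (rule image_subsetI)
    fix l
    assume l: "l \<in> Fp_additive_maps ?W'"
    have "\<forall>x\<in>?W'. \<forall>y\<in>?W'. l (x + y) = l x + l y" "\<forall>x\<in>?W'. l x \<in> prime_subfield"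
      using l by (simp_all add: Fp_additive_maps_def)
    moreover have "W \<subseteq> ?W'" "\<forall>x\<in>W. \<forall>y\<in>W. x + y \<in> W"
      using subset_add_subgroup_extend W by (simp_all add: add_subgroup_def)
    ultimately have "(\<lambda>x. if x \<in> W then l x else 0) \<in> Fp_additive_maps W"
      unfolding Fp_additive_maps_def by auto
    moreover have "l w \<in> prime_subfield"
      using l w by (simp add: Fp_additive_maps_def)
    ultimately show "restr l \<in> Fp_additive_maps W \<times> prime_subfield"
      by (simp add: restr_def)
  qed
  moreover have "inj_on restr (Fp_additive_maps ?W')"
  proof (rule inj_onI)
    fix l l'
    assume "l \<in> Fp_additive_maps ?W'" "l' \<in> Fp_additive_maps ?W'" "restr l = restr l'"
    thus "l = l'"
      using Fp_additive_maps_extend_eqI[OF W] by (simp add: restr_def fun_eq_iff) metis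
  qed
  ultimately have "card (Fp_additive_maps ?W') \<le> card (Fp_additive_maps W \<times> (prime_subfield :: 'a set))"
    using card_inj_on_le finite_cartesian_product finite_Fp_additive_maps
    by (metis finite)
  thus ?thesis
    by (simp add: card_cartesian_product card_prime_subfield)
qed

text \<open>Grow a subgroup by \<open>\<bbbF>\<^sub>p\<close>-multiples of a new element until it is everything, keeping
  the number of additive maps on it bounded by its size.\<close>
lemma exists_add_subgroup_few_maps:
  "\<exists>W. add_subgroup W \<and> card (Fp_additive_maps W) \<le> card W \<and> (W = UNIV \<or> m \<le> card W)"
proof (induction m)
  case 0
  have "add_subgroup {0}"
    by (simp add: add_subgroup_def)
  thus ?case
    using card_Fp_additive_maps_zero by (intro exI[of _ "{0}"]) auto
next
  case (Suc m)
  then obtain W where W: "add_subgroup W" "card (Fp_additive_maps W) \<le> card W"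
      "W = UNIV \<or> m \<le> card W"
    by blast
  show ?case
  proof (cases "W = UNIV")
    case True
    thus ?thesis
      using W by blast
  next
    case False
    then obtain w where w: "w \<notin> W"
      by blast
    have card: "card (add_subgroup_extend W w) = p * card W"
      using card_add_subgroup_extend[OF W(1) w] .
    have "card (Fp_additive_maps (add_subgroup_extend W w)) \<le> card (Fp_additive_maps W) * p"
      using card_Fp_additive_maps_extend[OF W(1)] .
    also have "\<dots> \<le> card (add_subgroup_extend W w)"
      using W(2) card by (simp add: mult.commute)
    finally have "card (Fp_additive_maps (add_subgroup_extend W w)) \<le> card (add_subgroup_extend W w)" .
    moreover have "Suc m \<le> card (add_subgroup_extend W w)"
    proof -
      have "card W > 0"
        using W(1) by (auto simp: add_subgroup_def card_gt_0_iff)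
      hence "1 * card W < p * card W"
        using p_gt_1 by (intro mult_less_mono1) auto
      thus ?thesis
        using W(3) False card by linarith
    qed
    ultimately show ?thesis
      using add_subgroup_add_subgroup_extend[OF W(1)] by blast
  qed
qed

lemma card_Fp_additive_maps_UNIV: "card (Fp_additive_maps UNIV) \<le> CARD('a)"
proof -
  obtain W where W: "card (Fp_additive_maps W) \<le> card W" "W = UNIV \<or> Suc CARD('a) \<le> card W"
    using exists_add_subgroup_few_maps[of "Suc CARD('a)"] by blast
  have "card W \<le> CARD('a)"
    by (rule card_mono) auto
  thus ?thesis
    using W by auto
qed

text \<open>Trace duality: the \<open>q\<close> maps \<open>x \<mapsto> tr (a x)\<close> are distinct, so they exhaust the at most
  \<open>q\<close> additive maps \<open>\<bbbF>\<^sub>q \<rightarrow> \<bbbF>\<^sub>p\<close>.\<close>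
lemma additive_Fp_valued_eq_trace:
  assumes add: "\<And>x y. l (x + y) = l x + l y" and val: "\<And>x. l x \<in> prime_subfield"
  shows "\<exists>a. \<forall>x. l x = tr (a * x)"
proof -
  define T where "T = (\<lambda>a. \<lambda>x::'a. tr (a * x)) ` UNIV"
  have TH: "T \<subseteq> Fp_additive_maps UNIV"
    by (auto simp: T_def Fp_additive_maps_def distrib_left trace_add trace_in_prime_subfield)
  have "inj (\<lambda>a. \<lambda>x::'a. tr (a * x))"
  proof (rule injI)
    fix a b
    assume e: "(\<lambda>x::'a. tr (a * x)) = (\<lambda>x. tr (b * x))"
    show "a = b"
    proof (rule ccontr)
      assume "a \<noteq> b"
      then obtain c where "tr ((a - b) * c) \<noteq> 0"
        using exists_trace_mult_nonzero[of "a - b"] by auto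
      thus False
        using fun_cong[OF e, of c] by (simp add: left_diff_distrib trace_diff)
    qed
  qed
  hence "card T = CARD('a)"
    by (simp add: T_def card_image)
  hence "T = Fp_additive_maps UNIV"
    using TH card_Fp_additive_maps_UNIV card_mono[OF finite_Fp_additive_maps TH]
    by (intro card_subset_eq finite_Fp_additive_maps) auto
  moreover have "l \<in> Fp_additive_maps UNIV"
    using add val by (simp add: Fp_additive_maps_def)
  ultimately obtain a where "l = (\<lambda>x. tr (a * x))"
    unfolding T_def by blast
  thus ?thesis
    by auto
qed

end

section \<open>The additive character\<close>

locale additive_character = finite_field_order p n for p n +
  fixes psi :: "'a::{field,finite} \<Rightarrow> complex"
  assumes nontrivial_psi: "nontrivial_add_char_Fp psi"
begin

lemma psi_nonzero: "x \<in> prime_subfield \<Longrightarrow> psi x \<noteq> 0"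
  and psi_add: "x \<in> prime_subfield \<Longrightarrow> y \<in> prime_subfield \<Longrightarrow> psi (x + y) = psi x * psi y"
  using nontrivial_psi unfolding nontrivial_add_char_Fp_def by auto

lemma psi_0 [simp]: "psi 0 = 1"
  using psi_add[of 0 0] psi_nonzero[of 0] by simp

lemma psi_of_nat_mult: "z \<in> prime_subfield \<Longrightarrow> psi (of_nat m * z) = psi z ^ m"
proof (induction m)
  case 0
  show ?case
    by simp
next
  case (Suc m)
  have "psi (z + of_nat m * z) = psi z * psi (of_nat m * z)"
    using Suc.prems by (intro psi_add prime_subfield_mult) auto
  thus ?case
    using Suc by (simp add: distrib_right)
qed

lemma psi_eq_1_iff:
  assumes "x \<in> prime_subfield"
  shows "psi x = 1 \<longleftrightarrow> x = 0"
proof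
  assume x: "psi x = 1"
  show "x = 0"
  proof (rule ccontr)
    assume "x \<noteq> 0"
    \<comment> \<open>every element of \<open>\<bbbF>\<^sub>p\<close> is an integer multiple of \<open>x\<close>, so \<open>psi\<close> would be trivial\<close>
    obtain y where y: "y \<in> prime_subfield" "psi y \<noteq> 1"
      using nontrivial_psi unfolding nontrivial_add_char_Fp_def by auto
    have "y / x \<in> prime_subfield"
      using assms y by (simp add: divide_inverse prime_subfield_mult prime_subfield_inverse)
    then obtain m where "y = of_nat m * x"
      using \<open>x \<noteq> 0\<close> by (auto simp: prime_subfield_def field_simps)
    thus False
      using psi_of_nat_mult[OF assms, of m] x y by simp
  qed
next
  assume "x = 0"
  thus "psi x = 1"
    by simp
qed

lemma psi_eq_iff:
  assumes "x \<in> prime_subfield" "y \<in> prime_subfield"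
  shows "psi x = psi y \<longleftrightarrow> x = y"
proof -
  have "psi x = psi (x - y) * psi y"
    using assms by (metis prime_subfield_diff diff_add_cancel psi_add)
  thus ?thesis
    using assms psi_nonzero[of y] psi_eq_1_iff[of "x - y"] prime_subfield_diff by auto
qed

lemma psi_surj:
  assumes z: "z ^ p = 1"
  shows "\<exists>x\<in>prime_subfield. psi x = z"
proof -
  \<comment> \<open>\<open>psi\<close> maps the \<open>p\<close> elements of \<open>\<bbbF>\<^sub>p\<close> injectively into the \<open>p\<close>-th roots of unity\<close>
  define P :: "complex poly" where "P = monom 1 p - 1"
  have "coeff P p = 1"
    using p_gt_1 by (simp add: P_def coeff_monom)
  hence P0: "P \<noteq> 0"
    by auto
  have "degree P \<le> p"
    unfolding P_def using p_gt_1 by (intro degree_diff_le) (auto simp: degree_monom_eq)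
  moreover have roots: "{y. poly P y = 0} = {y::complex. y ^ p = 1}"
    by (auto simp: P_def poly_monom)
  ultimately have "card {y::complex. y ^ p = 1} \<le> p"
    using card_poly_roots_bound[OF P0] by simp
  moreover have fin: "finite {y::complex. y ^ p = 1}"
    using poly_roots_finite[OF P0] roots by simp
  moreover have sub: "psi ` prime_subfield \<subseteq> {y::complex. y ^ p = 1}"
    using psi_of_nat_mult[of _ p] by auto
  moreover have "card (psi ` prime_subfield) = p"
    using card_prime_subfield psi_eq_iff by (subst card_image) (auto simp: inj_on_def)
  moreover have "card (psi ` prime_subfield) \<le> card {y::complex. y ^ p = 1}"
    using fin sub by (intro card_mono)
  ultimately have "psi ` prime_subfield = {y::complex. y ^ p = 1}"
    by (intro card_subset_eq) auto
  hence "z \<in> psi ` prime_subfield"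
    using z by simp
  thus ?thesis
    by blast
qed

end

section \<open>The characters \<open>\<chi>\<^sub>f\<close>\<close>

lemma sum_mset_sum_swap:
  "(\<Sum>a\<in>#M. \<Sum>i\<in>A. f a i) = (\<Sum>i\<in>A. \<Sum>a\<in>#M. (f a i :: 'a::comm_monoid_add))"
  by (induction M) (simp_all add: sum.distrib)

lemma chi_f_eq_0: "coeff g 0 = 0 \<Longrightarrow> chi_f psi p n f g = 0"
  by (simp add: chi_f_def X_dvd_iff_coeff_0)

lemma F_setD:
  assumes "f \<in> F_set p d"
  shows "degree f = d" "coeff f d \<noteq> 0" "coeff f 0 = 0" "\<And>i. p dvd i \<Longrightarrow> coeff f i = 0"
  using assms by (auto simp: F_set_def)

context additive_character
begin

lemma chi_f_eq_psi_trace: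
  assumes f: "coeff f 0 = 0" "degree f \<le> d" and g0: "coeff g 0 \<noteq> 0"
  shows "chi_f psi p n f g = psi (tr (\<Sum>k\<in>{1..d}. coeff f k * newton_sum g k))"
proof -
  have "poly (map_poly to_ac f) \<alpha> = (\<Sum>i\<le>d. to_ac (coeff f i) * \<alpha> ^ i)" for \<alpha>
    unfolding poly_altdef degree_map_to_ac coeff_map_to_ac using f(2) by (intro sum.mono_neutral_left) (auto simp: coeff_eq_0)
  hence "(\<Sum>\<alpha>\<in>#inv_roots g. poly (map_poly to_ac f) \<alpha>)
      = (\<Sum>\<alpha>\<in>#inv_roots g. \<Sum>i\<le>d. to_ac (coeff f i) * \<alpha> ^ i)"
    by simp
  also have "\<dots> = (\<Sum>i\<le>d. to_ac (coeff f i) * inv_roots_power_sum g i)"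
    by (simp add: sum_mset_sum_swap inv_roots_power_sum_def sum_mset_distrib_left)
  also have "\<dots> = (\<Sum>i\<in>{1..d}. to_ac (coeff f i) * inv_roots_power_sum g i)"
  proof -
    have "{..d} = insert 0 {1..d}"
      by auto
    thus ?thesis
      using f(1) by simp
  qed
  also have "\<dots> = to_ac (\<Sum>k\<in>{1..d}. coeff f k * newton_sum g k)"
    by (simp add: to_ac_sum to_ac_newton_sum[OF g0])
  finally show ?thesis
    using g0 by (simp add: chi_f_def X_dvd_iff_coeff_0 inv_roots_def)
qed

lemma chi_f_cong:
  assumes f: "coeff f 0 = 0" "degree f \<le> d" and c: "\<And>i. i \<le> d \<Longrightarrow> coeff g i = coeff h i"
  shows "chi_f psi p n f g = chi_f psi p n f h"
proof (cases "coeff g 0 = 0")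
  case True
  then show ?thesis
    using c[of 0] by (simp add: chi_f_eq_0)
next
  case False
  have "(\<Sum>k\<in>{1..d}. coeff f k * newton_sum g k) = (\<Sum>k\<in>{1..d}. coeff f k * newton_sum h k)"
    using c by (intro sum.cong refl arg_cong2[where f="(*)"] newton_sum_cong) auto
  thus ?thesis
    using False c[of 0] by (simp add: chi_f_eq_psi_trace[OF f])
qed

lemma chi_f_mult:
  assumes f: "coeff f 0 = 0" "degree f \<le> d"
  shows "chi_f psi p n f (g * h) = chi_f psi p n f g * chi_f psi p n f h"
proof (cases "coeff g 0 = 0 \<or> coeff h 0 = 0")
  case True
  then show ?thesis
    by (auto simp: chi_f_eq_0 coeff_mult_0)
next
  case False
  hence "(\<Sum>k\<in>{1..d}. coeff f k * newton_sum (g * h) k) =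
        (\<Sum>k\<in>{1..d}. coeff f k * newton_sum g k) + (\<Sum>k\<in>{1..d}. coeff f k * newton_sum h k)"
    by (simp add: newton_sum_mult sum.distrib[symmetric] algebra_simps)
  thus ?thesis
    using False
    by (simp add: chi_f_eq_psi_trace[OF f] coeff_mult_0 trace_add psi_add trace_in_prime_subfield)
qed

lemma dirichlet_char_chi_f:
  assumes f: "coeff f 0 = 0" "degree f \<le> d"
  shows "dirichlet_char ([:0, 1:] ^ (d + 1)) (chi_f psi p n f)"
  unfolding dirichlet_char_def
proof (intro conjI allI impI)
  fix g :: "'a poly"
  show "\<not> coprime g ([:0, 1:] ^ (d + 1)) \<Longrightarrow> chi_f psi p n f g = 0"
    using coprime_X_power_iff[of "d + 1" g] chi_f_eq_0 by simp
  show "coprime g ([:0, 1:] ^ (d + 1)) \<Longrightarrow> chi_f psi p n f g \<noteq> 0"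
    using coprime_X_power_iff[of "d + 1" g]
    by (simp add: chi_f_eq_psi_trace[OF f] psi_nonzero trace_in_prime_subfield)
next
  fix g h :: "'a poly"
  assume "g mod [:0, 1:] ^ (d + 1) = h mod [:0, 1:] ^ (d + 1)"
  hence "g mod monom 1 (d + 1) = h mod monom 1 (d + 1)"
    by (simp only: X_power_eq_monom)
  thus "chi_f psi p n f g = chi_f psi p n f h"
    by (intro chi_f_cong[OF f]) (simp add: mod_monom_eq_iff)
qed (rule chi_f_mult[OF f])

lemma not_dvd_of_coprime: "coprime d p \<Longrightarrow> \<not> p dvd d"
  using p_gt_1 coprime_common_divisor[of d p p] by auto

lemma primitive_dirichlet_char_chi_f:
  assumes f: "f \<in> F_set p d" and d: "coprime d p"
  shows "primitive_dirichlet_char ([:0, 1:] ^ (d + 1)) (chi_f psi p n f)"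
  unfolding primitive_dirichlet_char_def
proof (intro conjI notI)
  have f': "coeff f 0 = 0" "degree f \<le> d"
    using F_setD[OF f] by simp_all
  show "dirichlet_char ([:0, 1:] ^ (d + 1)) (chi_f psi p n f)"
    by (rule dirichlet_char_chi_f[OF f'])
  assume "\<exists>Q1. lead_coeff Q1 = 1 \<and> Q1 dvd [:0, 1:] ^ (d + 1) \<and> Q1 \<noteq> [:0, 1:] ^ (d + 1) \<and>
     (\<forall>g h. coprime g ([:0, 1:] ^ (d + 1)) \<longrightarrow> coprime h ([:0, 1:] ^ (d + 1)) \<longrightarrow>
            g mod Q1 = h mod Q1 \<longrightarrow> chi_f psi p n f g = chi_f psi p n f h)"
  then obtain Q1 where Q1: "lead_coeff Q1 = 1" "Q1 dvd [:0, 1:] ^ Suc d" "Q1 \<noteq> [:0, 1:] ^ Suc d"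
    and period: "\<And>g h. coprime g ([:0, 1:] ^ (d + 1)) \<Longrightarrow> coprime h ([:0, 1:] ^ (d + 1)) \<Longrightarrow>
            g mod Q1 = h mod Q1 \<Longrightarrow> chi_f psi p n f g = chi_f psi p n f h"
    by auto
  have pd: "\<not> p dvd d"
    using not_dvd_of_coprime[OF d] .
  hence d1: "1 \<le> d"
    by (cases d) auto
  have "- of_nat d * coeff f d \<noteq> 0"
    using F_setD(2)[OF f] pd by (simp add: of_nat_eq_0_iff)
  then obtain c where c: "tr (- of_nat d * coeff f d * c) \<noteq> 0"
    using exists_trace_mult_nonzero by blast
  \<comment> \<open>\<open>1 + c x\<^sup>d\<close> is \<open>1\<close> modulo \<open>Q1\<close>, but \<open>chi_f\<close> separates them\<close>
  define g where "g = 1 + monom c d"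
  have g0: "coeff g 0 = 1"
    using d1 by (simp add: g_def coeff_monom)
  have "g - 1 = smult c ([:0, 1:] ^ d)"
    by (simp add: g_def X_power_eq_monom smult_monom)
  hence "Q1 dvd g - 1"
    using monic_proper_dvd_X_power[OF Q1] by (simp add: dvd_smult)
  moreover have "coprime g ([:0, 1:] ^ (d + 1))" "coprime 1 ([:0, 1::'a:] ^ (d + 1))"
    using g0 coprime_X_power_iff[of "d + 1" g] coprime_X_power_iff[of "d + 1" 1] by simp_all
  ultimately have "chi_f psi p n f g = chi_f psi p n f 1"
    by (intro period) (simp_all add: mod_eq_dvd_iff)
  moreover have "chi_f psi p n f 1 = 1"
    by (simp add: chi_f_eq_psi_trace[OF f'])
  moreover have "(\<Sum>k\<in>{1..d}. coeff f k * newton_sum g k) = - of_nat d * coeff f d * c"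
    unfolding g_def using d1 F_setD(1)[OF f]
    by (intro sum_newton_sum_one_plus_monom) (auto simp: coeff_eq_0)
  hence "chi_f psi p n f g = psi (tr (- of_nat d * coeff f d * c))"
    using g0 by (simp add: chi_f_eq_psi_trace[OF f'])
  ultimately show False
    using c psi_eq_1_iff trace_in_prime_subfield by simp
qed

lemma inj_on_chi_f: "inj_on (chi_f psi p n) (F_set p d)"
proof (rule inj_onI, rule ccontr)
  fix f1 f2 :: "'a poly"
  assume f1: "f1 \<in> F_set p d" and f2: "f2 \<in> F_set p d"
    and eq: "chi_f psi p n f1 = chi_f psi p n f2" and "f1 \<noteq> f2"
  \<comment> \<open>test both characters on \<open>1 + c x\<^sup>K\<close>, \<open>K\<close> the top degree where \<open>f1\<close> and \<open>f2\<close> differ\<close>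
  define a where "a k = coeff (f1 - f2) k" for k
  define K where "K = degree (f1 - f2)"
  have aK: "a K \<noteq> 0"
    unfolding a_def K_def using \<open>f1 \<noteq> f2\<close> by (metis leading_coeff_0_iff right_minus_eq)
  have above: "a k = 0" if "K < k" for k
    unfolding a_def using that coeff_eq_0[of "f1 - f2" k] by (simp only: K_def)
  have "K \<le> d"
    using degree_diff_le[of f1 d f2] F_setD(1)[OF f1] F_setD(1)[OF f2] by (simp add: K_def)
  have pK: "\<not> p dvd K"
    using aK F_setD(4)[OF f1] F_setD(4)[OF f2] by (auto simp: a_def)
  hence K1: "1 \<le> K"
    by (cases K) auto
  have "- of_nat K * a K \<noteq> 0"
    using aK pK by (simp add: of_nat_eq_0_iff)
  then obtain c where c: "tr (- of_nat K * a K * c) \<noteq> 0"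
    using exists_trace_mult_nonzero by blast
  define g where "g = 1 + monom c K"
  have g0: "coeff g 0 \<noteq> 0"
    using K1 by (simp add: g_def coeff_monom)
  define S where "S f = (\<Sum>k\<in>{1..d}. coeff f k * newton_sum g k)" for f
  have "psi (tr (S f1)) = psi (tr (S f2))"
    using fun_cong[OF eq, of g] chi_f_eq_psi_trace[of f1 d g] chi_f_eq_psi_trace[of f2 d g] g0
      F_setD(1,3)[OF f1] F_setD(1,3)[OF f2]
    by (simp add: S_def)
  hence "tr (S f1 - S f2) = 0"
    by (simp add: psi_eq_iff trace_in_prime_subfield trace_diff)
  moreover have "S f1 - S f2 = (\<Sum>k\<in>{1..d}. a k * newton_sum g k)"
    by (simp add: S_def a_def sum_subtractf[symmetric] algebra_simps)
  moreover have "\<dots> = - of_nat K * a K * c"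
    unfolding g_def using K1 \<open>K \<le> d\<close> above by (rule sum_newton_sum_one_plus_monom)
  ultimately show False
    using c by simp
qed

end

section \<open>Primitive characters of order \<open>p\<close>\<close>

locale primitive_character_of_order_p = additive_character p n psi
  for p n :: nat and psi :: "'a::{field,finite} \<Rightarrow> complex" +
  fixes d :: nat and chi :: "'a poly \<Rightarrow> complex"
  assumes coprime_d_p: "coprime d p"
    and primitive_chi: "primitive_dirichlet_char ([:0, 1:] ^ (d + 1)) chi"
    and chi_power_p: "trivial_char ([:0, 1:] ^ (d + 1)) (\<lambda>g. chi g ^ p)"
begin

lemma dirichlet_char_chi: "dirichlet_char ([:0, 1:] ^ (d + 1)) chi"
  using primitive_chi by (simp add: primitive_dirichlet_char_def)

lemma coprime_modulus_iff: "coprime g ([:0, 1:] ^ (d + 1)) \<longleftrightarrow> coeff g 0 \<noteq> (0::'a)"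
  using coprime_X_power_iff[of "d + 1" g] by simp

lemma chi_mult: "chi (g * h) = chi g * chi h"
  using dirichlet_char_chi unfolding dirichlet_char_def by blast

lemma chi_cong:
  assumes "\<And>i. i \<le> d \<Longrightarrow> coeff g i = coeff h i"
  shows "chi g = chi h"
proof -
  have "g mod monom 1 (d + 1) = h mod monom 1 (d + 1)"
    using assms by (simp add: mod_monom_eq_iff)
  hence "g mod [:0, 1:] ^ (d + 1) = h mod [:0, 1:] ^ (d + 1)"
    by (simp only: X_power_eq_monom)
  thus ?thesis
    using dirichlet_char_chi unfolding dirichlet_char_def by blast
qed

lemma chi_eq_0: "coeff g 0 = 0 \<Longrightarrow> chi g = 0"
  using dirichlet_char_chi coprime_modulus_iff unfolding dirichlet_char_def by blast

lemma chi_pow_p: "coeff g 0 \<noteq> 0 \<Longrightarrow> chi g ^ p = 1"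
  using chi_power_p coprime_modulus_iff by (simp add: trivial_char_def)

lemma p_not_dvd_d: "\<not> p dvd d"
  by (rule not_dvd_of_coprime[OF coprime_d_p])

lemma d_pos: "1 \<le> d"
  using p_not_dvd_d by (cases d) auto

text \<open>Since \<open>chi\<close> takes values in the \<open>p\<close>-th roots of unity, \<open>chi = psi \<circ> dlog\<close> for a unique
  \<open>\<bbbF>\<^sub>p\<close>-valued \<open>dlog\<close>, which is a homomorphism from the units modulo \<open>x\<^sup>d\<^sup>+\<^sup>1\<close> to \<open>(\<bbbF>\<^sub>p, +)\<close>.\<close>
definition dlog :: "'a poly \<Rightarrow> 'a" where
  "dlog g = (if coeff g 0 \<noteq> 0 then (THE y. y \<in> prime_subfield \<and> psi y = chi g) else 0)"

lemma dlog:
  assumes "coeff g 0 \<noteq> 0"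
  shows dlog_in_prime_subfield: "dlog g \<in> prime_subfield" and psi_dlog: "psi (dlog g) = chi g"
proof -
  obtain y where y: "y \<in> prime_subfield" "psi y = chi g"
    using psi_surj[OF chi_pow_p[OF assms]] by blast
  have "(THE y. y \<in> prime_subfield \<and> psi y = chi g) = y"
    using y by (intro the_equality) (auto simp: psi_eq_iff[symmetric])
  thus "dlog g \<in> prime_subfield" "psi (dlog g) = chi g"
    using y assms by (simp_all add: dlog_def)
qed

lemma dlog_mult:
  assumes "coeff g 0 \<noteq> 0" "coeff h 0 \<noteq> 0"
  shows "dlog (g * h) = dlog g + dlog h"
proof -
  have "coeff (g * h) 0 \<noteq> 0"
    using assms by (simp add: coeff_mult_0)
  moreover have "psi (dlog g + dlog h) = chi (g * h)"
    using assms by (simp add: dlog psi_add chi_mult)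
  ultimately show ?thesis
    using assms by (simp add: dlog psi_eq_iff[symmetric] prime_subfield_add)
qed

lemma dlog_cong:
  assumes "coeff g 0 \<noteq> 0" "\<And>i. i \<le> d \<Longrightarrow> coeff g i = coeff h i"
  shows "dlog g = dlog h"
proof -
  have "coeff h 0 \<noteq> 0"
    using assms by auto
  thus ?thesis
    using assms chi_cong[OF assms(2)] by (simp add: dlog psi_eq_iff[symmetric])
qed

lemma dlog_1 [simp]: "dlog 1 = 0"
proof -
  have "dlog (1 * 1) = dlog 1 + dlog 1"
    by (rule dlog_mult) simp_all
  thus ?thesis
    by (simp only: mult_1 add_cancel_right_right)
qed

lemma dlog_power: "coeff h 0 \<noteq> 0 \<Longrightarrow> dlog (h ^ m) = of_nat m * dlog h"
proof (induction m)
  case (Suc m)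
  have "coeff (h ^ m) 0 \<noteq> 0"
    using Suc.prems by (simp add: coeff_0_power)
  thus ?case
    using Suc by (simp add: dlog_mult algebra_simps)
qed simp

text \<open>The remaining power sums \<open>s\<^sub>k\<close>, \<open>k \<le> d\<close>, are determined by \<open>s\<^sub>p\<^sub>m = s\<^sub>m\<^sup>p\<close>.\<close>
definition free_indices :: "nat set" where
  "free_indices = {k. 1 \<le> k \<and> k \<le> d \<and> \<not> p dvd k}"

lemma finite_free_indices: "finite free_indices"
  by (rule finite_subset[of _ "{..d}"]) (auto simp: free_indices_def)

lemma newton_sums_vanish:
  fixes g :: "'a poly"
  assumes g0: "coeff g 0 \<noteq> 0" and z: "\<forall>k\<in>free_indices. newton_sum g k = 0"
  shows "1 \<le> k \<Longrightarrow> k \<le> d \<Longrightarrow> newton_sum g k = 0"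
proof (induction k rule: less_induct)
  case (less k)
  show ?case
  proof (cases "p dvd k")
    case False
    thus ?thesis
      using z less.prems by (auto simp: free_indices_def)
  next
    case True
    then obtain m where m: "k = p * m"
      by (elim dvdE)
    have m1: "1 \<le> m"
      using less.prems m by (cases m) auto
    have "m < k"
      using m m1 p_gt_1 by simp
    hence "newton_sum g m = 0"
      using less.IH[of m] m1 less.prems by simp
    thus ?thesis
      using newton_sum_CHAR_mult[of g m] g0 m1 m p_gt_1 prime_p by (simp add: CHAR_eq)
  qed
qed

lemma coeff_eq_0_if_newton_sums_vanish:
  fixes g :: "'a poly"
  assumes g0: "coeff g 0 \<noteq> 0" and z: "\<forall>k\<in>free_indices. newton_sum g k = 0"
    and k: "k \<in> free_indices"
  shows "coeff g k = 0"
proof -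
  have k1: "1 \<le> k" "k \<le> d" "\<not> p dvd k"
    using k by (auto simp: free_indices_def)
  have "(\<Sum>i\<in>{1..<k}. coeff g i * newton_sum g (k - i)) = 0"
    using newton_sums_vanish[OF g0 z] k1 by (intro sum.neutral) auto
  hence "newton_sum g k = - of_nat k * coeff g k / coeff g 0"
    using k1 by (subst newton_sum.simps) simp
  hence "of_nat k * coeff g k = 0"
    using z k g0 by (simp add: field_simps)
  thus ?thesis
    using k1(3) by (simp add: of_nat_eq_0_iff)
qed

text \<open>If the free power sums of \<open>g\<close> vanish, then \<open>g \<equiv> h\<^sup>p\<close> and \<open>dlog g = p \<cdot> dlog h = 0\<close>.\<close>
lemma dlog_eq_0_if_newton_sums_vanish:
  assumes g0: "coeff g 0 \<noteq> 0" and z: "\<forall>k\<in>free_indices. newton_sum g k = 0"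
  shows "dlog g = 0"
proof -
  have "coeff g k = 0" if "1 \<le> k" "k \<le> d" "\<not> p dvd k" for k
    using that coeff_eq_0_if_newton_sums_vanish[OF g0 z] by (simp add: free_indices_def)
  then obtain h where h: "\<forall>i\<le>d. coeff (h ^ p) i = coeff g i"
    using exists_pth_root_mod_X_power by blast
  hence "coeff h 0 ^ p = coeff g 0"
    by (metis coeff_0_power le0)
  hence h0: "coeff h 0 \<noteq> 0"
    using g0 p_gt_1 by (cases "coeff h 0 = 0") (auto simp: power_0_left)
  moreover have "dlog (h ^ p) = dlog g"
    using h h0 by (intro dlog_cong) (auto simp: coeff_0_power)
  ultimately show ?thesis
    using dlog_power[of h p] by simp
qed

lemma dlog_eq_if_newton_sums_eq:
  fixes g g' :: "'a poly"
  assumes g0: "coeff g 0 \<noteq> 0" and g0': "coeff g' 0 \<noteq> 0"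
    and eq: "\<forall>k\<in>free_indices. newton_sum g k = newton_sum g' k"
  shows "dlog g = dlog g'"
proof -
  obtain u where "monom 1 (d + 1) dvd g' * u - 1"
    using exists_inverse_mod_X_power[OF g0'] by blast
  hence cu: "coeff (g' * u) i = coeff 1 i" if "i \<le> d" for i
    using that by (simp add: monom_1_dvd_iff')
  hence gu0: "coeff (g' * u) 0 \<noteq> 0"
    by simp
  hence u0: "coeff u 0 \<noteq> 0"
    by (simp add: coeff_mult_0)
  have "newton_sum (g' * u) k = 0" if "k \<le> d" for k
    using newton_sum_cong[of k "g' * u" 1] cu that by simp
  hence "\<forall>k\<in>free_indices. newton_sum (g * u) k = 0"
    using eq g0 g0' u0 by (simp add: newton_sum_mult free_indices_def)
  hence "dlog g + dlog u = 0"
    using g0 u0 dlog_eq_0_if_newton_sums_vanish[of "g * u"] by (simp add: coeff_mult_0 dlog_mult)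
  moreover have "dlog g' + dlog u = 0"
    using dlog_cong[OF gu0 cu] g0' u0 by (simp add: dlog_mult)
  ultimately show ?thesis
    by (metis add_right_cancel)
qed

lemma exists_newton_sums:
  "\<exists>g :: 'a poly. coeff g 0 = 1 \<and> (\<forall>k\<in>free_indices. newton_sum g k = v k)"
proof -
  \<comment> \<open>fix the free power sums one at a time, in increasing order, by factors \<open>1 + c x\<^sup>m\<close>\<close>
  have "\<exists>g :: 'a poly. coeff g 0 = 1 \<and> (\<forall>k\<in>free_indices. k < m \<longrightarrow> newton_sum g k = v k)" for m
  proof (induction m)
    case 0
    show ?case
      by (intro exI[of _ 1]) simp
  next
    case (Suc m)
    then obtain g :: "'a poly"
      where g: "coeff g 0 = 1" "\<forall>k\<in>free_indices. k < m \<longrightarrow> newton_sum g k = v k"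
      by blast
    show ?case
    proof (cases "m \<in> free_indices")
      case False
      thus ?thesis
        using g by (intro exI[of _ g]) (auto simp: less_Suc_eq)
    next
      case True
      hence m1: "1 \<le> m" and pm: "\<not> p dvd m"
        by (auto simp: free_indices_def)
      define b where "b = 1 + monom ((newton_sum g m - v m) / of_nat m) m"
      have b0: "coeff b 0 = 1"
        using m1 by (simp add: b_def coeff_monom)
      have "newton_sum (g * b) k = v k" if "k \<in> free_indices" "k < Suc m" for k
      proof -
        have "newton_sum (g * b) k = newton_sum g k + newton_sum b k"
          using g b0 by (intro newton_sum_mult) auto
        thus ?thesis
          using that g m1 pm by (auto simp: b_def newton_sum_one_plus_monom of_nat_eq_0_iff)
      qed
      moreover have "coeff (g * b) 0 = 1"
        using g b0 by (simp add: coeff_mult_0)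
      ultimately show ?thesis
        by blast
    qed
  qed
  from this[of "Suc d"] show ?thesis
    by (auto simp: free_indices_def)
qed

text \<open>\<open>dlog\<close> as a function of the vector of free power sums, well defined by
  \<open>dlog_eq_if_newton_sums_eq\<close>.\<close>
definition dlog_vec :: "(nat \<Rightarrow> 'a) \<Rightarrow> 'a" where
  "dlog_vec v = dlog (SOME g. coeff g 0 \<noteq> 0 \<and> (\<forall>k\<in>free_indices. newton_sum g k = v k))"

lemma dlog_vec_newton_sums: "coeff g 0 \<noteq> 0 \<Longrightarrow> dlog_vec (newton_sum g) = dlog g"
  unfolding dlog_vec_def
  by (rule someI2[of _ g]) (auto intro: dlog_eq_if_newton_sums_eq)

lemma dlog_vec_cong: "(\<And>k. k \<in> free_indices \<Longrightarrow> v k = w k) \<Longrightarrow> dlog_vec v = dlog_vec w"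
  unfolding dlog_vec_def by (metis (mono_tags, lifting))

lemma dlog_vec_eq_dlog:
  "\<exists>g. coeff g 0 \<noteq> 0 \<and> dlog_vec v = dlog g \<and> (\<forall>k\<in>free_indices. newton_sum g k = v k)"
proof -
  obtain g :: "'a poly" where g: "coeff g 0 = 1" "\<forall>k\<in>free_indices. newton_sum g k = v k"
    using exists_newton_sums by blast
  hence "dlog_vec v = dlog g"
    using dlog_vec_cong[of v "newton_sum g"] dlog_vec_newton_sums[of g] by simp
  thus ?thesis
    using g by (intro exI[of _ g]) auto
qed

lemma dlog_vec_in_prime_subfield: "dlog_vec v \<in> prime_subfield"
  using dlog_vec_eq_dlog[of v] dlog_in_prime_subfield by auto

lemma dlog_vec_add: "dlog_vec (\<lambda>k. v k + w k) = dlog_vec v + dlog_vec w"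
proof -
  obtain g where g: "coeff g 0 \<noteq> 0" "dlog_vec v = dlog g" "\<forall>k\<in>free_indices. newton_sum g k = v k"
    using dlog_vec_eq_dlog by blast
  obtain h where h: "coeff h 0 \<noteq> 0" "dlog_vec w = dlog h" "\<forall>k\<in>free_indices. newton_sum h k = w k"
    using dlog_vec_eq_dlog by blast
  have "dlog_vec (\<lambda>k. v k + w k) = dlog_vec (newton_sum (g * h))"
    using g h by (intro dlog_vec_cong) (simp add: newton_sum_mult)
  also have "\<dots> = dlog (g * h)"
    using g h by (intro dlog_vec_newton_sums) (simp add: coeff_mult_0)
  finally show ?thesis
    using g h by (simp add: dlog_mult)
qed

lemma dlog_vec_sum: "finite S \<Longrightarrow> dlog_vec (\<lambda>k. \<Sum>j\<in>S. e j k) = (\<Sum>j\<in>S. dlog_vec (e j))"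
proof (induction S rule: finite_induct)
  case empty
  have "newton_sum (1 :: 'a poly) = (\<lambda>k. 0)"
    by (simp add: fun_eq_iff)
  thus ?case
    using dlog_vec_newton_sums[of 1] by simp
next
  case (insert x S)
  thus ?case
    using dlog_vec_add[of "e x"] by simp
qed

text \<open>By trace duality, each coordinate of the additive map \<open>dlog_vec\<close> is a trace form.\<close>
lemma dlog_eq_trace:
  "\<exists>a. \<forall>g. coeff g 0 \<noteq> 0 \<longrightarrow> dlog g = tr (\<Sum>j\<in>free_indices. a j * newton_sum g j)"
proof -
  define unit_vec :: "nat \<Rightarrow> 'a \<Rightarrow> nat \<Rightarrow> 'a"
    where "unit_vec j y = (\<lambda>k. if k = j then y else 0)" for j y
  have "\<exists>a. \<forall>y. dlog_vec (unit_vec j y) = tr (a * y)" for j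
  proof (rule additive_Fp_valued_eq_trace)
    fix x y
    have "unit_vec j (x + y) = (\<lambda>k. unit_vec j x k + unit_vec j y k)"
      by (simp add: unit_vec_def fun_eq_iff)
    thus "dlog_vec (unit_vec j (x + y)) = dlog_vec (unit_vec j x) + dlog_vec (unit_vec j y)"
      by (simp add: dlog_vec_add)
  qed (rule dlog_vec_in_prime_subfield)
  then obtain a where a: "\<And>j y. dlog_vec (unit_vec j y) = tr (a j * y)"
    by metis
  have "dlog g = tr (\<Sum>j\<in>free_indices. a j * newton_sum g j)" if g0: "coeff g 0 \<noteq> 0" for g
  proof -
    have "dlog g = dlog_vec (newton_sum g)"
      using dlog_vec_newton_sums[OF g0] by simp
    also have "\<dots> = dlog_vec (\<lambda>k. \<Sum>j\<in>free_indices. unit_vec j (newton_sum g j) k)"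
      by (rule dlog_vec_cong) (simp add: unit_vec_def finite_free_indices)
    also have "\<dots> = tr (\<Sum>j\<in>free_indices. a j * newton_sum g j)"
      by (simp add: dlog_vec_sum[OF finite_free_indices] a trace_sum)
    finally show ?thesis .
  qed
  thus ?thesis
    by blast
qed

lemma chi_eq_psi_trace:
  assumes a: "\<And>g. coeff g 0 \<noteq> 0 \<Longrightarrow> dlog g = tr (\<Sum>j\<in>free_indices. a j * newton_sum g j)"
    and g0: "coeff g 0 \<noteq> 0"
  shows "chi g = psi (tr (\<Sum>j\<in>free_indices. a j * newton_sum g j))"
  using psi_dlog[OF g0] a[OF g0] by simp

text \<open>If the top coefficient vanished, \<open>chi\<close> would already be defined modulo \<open>x\<^sup>d\<close>.\<close>
lemma top_trace_coeff_nonzero: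
  assumes a: "\<And>g. coeff g 0 \<noteq> 0 \<Longrightarrow> dlog g = tr (\<Sum>j\<in>free_indices. a j * newton_sum g j)"
  shows "a d \<noteq> 0"
proof
  assume ad: "a d = 0"
  have "lead_coeff ([:0, 1::'a:] ^ d) = 1"
    by (simp add: lead_coeff_power)
  moreover have "[:0, 1::'a:] ^ d dvd [:0, 1:] ^ (d + 1)"
    by (rule le_imp_power_dvd) simp
  moreover have "[:0, 1::'a:] ^ d \<noteq> [:0, 1:] ^ (d + 1)"
    by (metis X_power_eq_monom degree_monom_eq one_neq_zero n_not_Suc_n Suc_eq_plus1)
  moreover have "chi g = chi h"
    if "coprime g ([:0, 1:] ^ (d + 1))" "coprime h ([:0, 1:] ^ (d + 1))"
       "g mod [:0, 1:] ^ d = h mod [:0, 1:] ^ d" for g h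
  proof -
    have g0: "coeff g 0 \<noteq> 0" and h0: "coeff h 0 \<noteq> 0"
      using that(1,2) coprime_modulus_iff by simp_all
    have "g mod monom 1 d = h mod monom 1 d"
      using that(3) by (simp only: X_power_eq_monom)
    hence "newton_sum g j = newton_sum h j" if "j < d" for j
      using that by (intro newton_sum_cong) (simp add: mod_monom_eq_iff)
    hence "(\<Sum>j\<in>free_indices. a j * newton_sum g j) = (\<Sum>j\<in>free_indices. a j * newton_sum h j)"
      using ad by (intro sum.cong) (auto simp: free_indices_def order.order_iff_strict)
    thus ?thesis
      using chi_eq_psi_trace[OF a g0] chi_eq_psi_trace[OF a h0] by simp
  qed
  ultimately show False
    using primitive_chi unfolding primitive_dirichlet_char_def by blast
qed

lemma exists_chi_f_eq_chi: "\<exists>f \<in> F_set p d. chi = chi_f psi p n f"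
proof -
  obtain a where a: "\<And>g. coeff g 0 \<noteq> 0 \<Longrightarrow> dlog g = tr (\<Sum>j\<in>free_indices. a j * newton_sum g j)"
    using dlog_eq_trace by blast
  define f where "f = (\<Sum>j\<in>free_indices. monom (a j) j)"
  have coeff_f: "coeff f k = (if k \<in> free_indices then a k else 0)" for k
    by (simp add: f_def coeff_sum coeff_monom finite_free_indices)
  have d: "d \<in> free_indices"
    using d_pos p_not_dvd_d by (simp add: free_indices_def)
  have "degree f = d"
  proof (rule antisym)
    show "degree f \<le> d"
      by (rule degree_le) (auto simp: coeff_f free_indices_def)
    show "d \<le> degree f"
      by (rule le_degree) (use top_trace_coeff_nonzero[OF a] d in \<open>simp add: coeff_f\<close>)
  qed
  hence f: "f \<in> F_set p d"
    using top_trace_coeff_nonzero[OF a] d by (auto simp: F_set_def coeff_f free_indices_def)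
  have "chi g = chi_f psi p n f g" for g
  proof (cases "coeff g 0 = 0")
    case True
    thus ?thesis
      by (simp add: chi_eq_0 chi_f_eq_0)
  next
    case False
    have "(\<Sum>k\<in>{1..d}. coeff f k * newton_sum g k) = (\<Sum>j\<in>free_indices. a j * newton_sum g j)"
      by (rule sum.mono_neutral_cong_right) (auto simp: free_indices_def coeff_f)
    thus ?thesis
      using chi_eq_psi_trace[OF a False] chi_f_eq_psi_trace[of f d g] F_setD(1,3)[OF f] False by simp
  qed
  thus ?thesis
    using f by blast
qed

end

theorem lemma10:
  fixes p n d :: nat
    and psi :: "'a::{field, finite} \<Rightarrow> complex"
  assumes "prime p"
    and "CARD('a) = p ^ n"
    and "coprime d p"
    and "nontrivial_add_char_Fp psi"
  shows "(\<forall>f \<in> (F_set p d :: 'a poly set).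
            primitive_dirichlet_char ([:0, 1:] ^ (d + 1)) (chi_f psi p n f))
       \<and> inj_on (\<lambda>f. chi_f psi p n f) (F_set p d)
       \<and> (\<forall>chi. primitive_dirichlet_char ([:0, 1:] ^ (d + 1)) chi
               \<and> trivial_char ([:0, 1:] ^ (d + 1)) (\<lambda>g. chi g ^ p)
               \<longrightarrow> (\<exists>f \<in> F_set p d. chi = chi_f psi p n f))"
proof -
  interpret additive_character p n psi
    using assms by unfold_locales auto
  have "primitive_character_of_order_p p n psi d chi"
    if "primitive_dirichlet_char ([:0, 1:] ^ (d + 1)) chi"
       "trivial_char ([:0, 1:] ^ (d + 1)) (\<lambda>g. chi g ^ p)" for chi
    using that assms(3) by unfold_locales
  thus ?thesis
    using primitive_dirichlet_char_chi_f[OF _ assms(3)] inj_on_chi_f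
      primitive_character_of_order_p.exists_chi_f_eq_chi
    by blast
qed

end
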